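(* In the setting where delays are available at action time, the expected regret of Skipper$(\beta,\mathrm{DEW}(\eta,\beta))$ tuned by the scheme Doubling (see context) satisfies, for every $T$ and without prior knowledge of $T$ or $D$, $$\bar{\mathcal R}_T\le 30\sqrt{\left(\frac{KTe}{2}+(1+4e)D\right)\ln K}+10e^2K\ln K+5.$$
   Context: Setting: fix integers $K\ge 2$, $T\ge 1$, $[K]=\{1,\dots,K\}$. An oblivious adversary fixes in advance losses $\ell_t^a\in[0,1]$ and nonnegative integer delays $d_t$. In each round $t$ the delay $d_t$ is revealed to the learner at the beginning of the round (delay available at action time); the learner then picks (possibly at random) $A_t\in[K]$, suffers $\ell_t^{A_t}$, and at the end of round $t$ observes the pairs $(s,\ell_s^{A_s})$ for all $s\le t$ with $s+d_s=t$. Expected regret: $\bar{\mathcal R}_T=\mathbb E[\sum_{t=1}^T\ell_t^{A_t}]-\min_a\sum_{t=1}^T\ell_t^a$. $D=\sum_{t=1}^Td_t$. Algorithm DEW with inputs $\eta>0$ and $d_{\max}$: $\eta'=\min\{\eta,(4e\,d_{\max})^{-1}\}$, $w_0^a=1$; in round $t$ play $A_t\sim p_t$ with $p_t^a=w_{t-1}^a/\sum_b w_{t-1}^b$; at the end of the round, for each received pair $(s,\ell_s^{A_s})$ form $\hat\ell_s^a=\ell_s^a\mathbb 1(a=A_s)/p_s^a$ and update $w_t^a=w_{t-1}^a\exp(-\eta'\sum_s\hat\ell_s^a)$ (sum over pairs received in round $t$). Skipper$(\beta,\mathcal A)$ plays the actions of the base algorithm $\mathcal A$ and forwards to $\mathcal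 A$ only the pairs $(s,\ell_s^{A_s})$ with $d_s<\beta$. Skipper$(\beta,\mathrm{DEW}(\eta,\beta))$ uses DEW with learning rate $\eta$ and $d_{\max}=\beta$. Doubling: rounds are partitioned into consecutive epochs indexed by $m$, with $\omega_m=2^m$, $\beta_m=\sqrt{\omega_m}/(4e\ln K)$ and $\eta_m=1/(4e\beta_m)$; in each epoch a fresh copy of Skipper$(\beta_m,\mathrm{DEW}(\eta_m,\beta_m))$ is run. For epoch $m$ let $\sigma(m)$ be its number of rounds, $S^m_\beta$ the set of its rounds with $d_t\ge\beta$, and $D^m_\beta$ the sum of $d_t$ over its rounds with $d_t<\beta$. At the beginning of each round $t$, after $d_t$ is revealed, the algorithm stays in the current epoch $m$ if, with round $t$ included in epoch $m$, $$\max\Big\{|S^m_{\beta_m}|^2,\ \Big(\tfrac{eK\sigma(m)}{2}+D^m_{\beta_m}\Big)\ln K\Big\}\le\omega_m;$$ otherwise a new epoch (with a larger index) is started at round $t$, before $A_t$ is selected. *)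

theory Defs
  imports Complex_Main
begin

text \<open>Rounds are indexed 1, 2, ...; actions are 1..K.  A history hs is a list of
  actions with hs ! (s - 1) the action played in round s.
  Losses: l t a; delays: d t.\<close>

definition beta :: "nat \<Rightarrow> nat \<Rightarrow> real" where
  "beta K m = sqrt (2 ^ m) / (4 * exp 1 * ln (real K))"

definition eta :: "nat \<Rightarrow> nat \<Rightarrow> real" where
  "eta K m = 1 / (4 * exp 1 * beta K m)"

text \<open>Doubling condition: epoch m consisting of rounds r..t.\<close>
definition epoch_ok :: "nat \<Rightarrow> (nat \<Rightarrow> nat) \<Rightarrow> nat \<Rightarrow> nat \<Rightarrow> nat \<Rightarrow> bool" where
  "epoch_ok K d m r t \<longleftrightarrow>
     max ((real (card {s \<in> {r..t}. real (d s) \<ge> beta K m}))\<^sup>2)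
         ((exp 1 * real K * real (t - r + 1) / 2
            + real (\<Sum>s \<in> {s \<in> {r..t}. real (d s) < beta K m}. d s)) * ln (real K))
     \<le> 2 ^ m"

text \<open>epoch K d t = (m, r): index m and first round r of the epoch containing round t
  (t \<ge> 1).  epoch K d 0 = (0, 1) is the initial (empty) epoch.\<close>
primrec epoch :: "nat \<Rightarrow> (nat \<Rightarrow> nat) \<Rightarrow> nat \<Rightarrow> nat \<times> nat" where
  "epoch K d 0 = (0, 1)"
| "epoch K d (Suc t) =
     (let (m, r) = epoch K d t in
      if epoch_ok K d m r (Suc t) then (m, r)
      else (LEAST m'. m < m' \<and> epoch_ok K d m' (Suc t) (Suc t), Suc t))"

text \<open>Probability p_t^a of DEW (inside Skipper, fresh copy per epoch) at round t,
  given history hs and the table Q s b = p_s^b of earlier rounds.\<close>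
definition dew_prob ::
  "nat \<Rightarrow> (nat \<Rightarrow> nat \<Rightarrow> real) \<Rightarrow> (nat \<Rightarrow> nat) \<Rightarrow> nat list \<Rightarrow> (nat \<Rightarrow> nat \<Rightarrow> real)
    \<Rightarrow> nat \<Rightarrow> nat \<Rightarrow> real" where
  "dew_prob K l d hs Q t a =
     (let (m, r) = epoch K d t;
          \<eta>' = min (eta K m) (1 / (4 * exp 1 * beta K m));
          recv = {s \<in> {r..<t}. s + d s < t \<and> real (d s) < beta K m};
          w = (\<lambda>b. exp (- \<eta>' * (\<Sum>s\<in>recv. if b = hs ! (s - 1) then l s b / Q s b else 0)))
      in w a / (\<Sum>b\<in>{1..K}. w b))"

primrec probs ::
  "nat \<Rightarrow> (nat \<Rightarrow> nat \<Rightarrow> real) \<Rightarrow> (nat \<Rightarrow> nat) \<Rightarrow> nat list \<Rightarrow> nat \<Rightarrow> nat \<Rightarrow> nat \<Rightarrow> real" where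
  "probs K l d hs 0 = (\<lambda>s a. 0)"
| "probs K l d hs (Suc n) =
     (probs K l d hs n)(Suc n := dew_prob K l d hs (probs K l d hs n) (Suc n))"

definition hist_prob :: "nat \<Rightarrow> (nat \<Rightarrow> nat \<Rightarrow> real) \<Rightarrow> (nat \<Rightarrow> nat) \<Rightarrow> nat list \<Rightarrow> real" where
  "hist_prob K l d hs = (\<Prod>t\<in>{1..length hs}. probs K l d hs (length hs) t (hs ! (t - 1)))"

definition expected_regret :: "nat \<Rightarrow> nat \<Rightarrow> (nat \<Rightarrow> nat \<Rightarrow> real) \<Rightarrow> (nat \<Rightarrow> nat) \<Rightarrow> real" where
  "expected_regret K T l d =
     (\<Sum>hs\<in>{hs. length hs = T \<and> set hs \<subseteq> {1..K}}.
        hist_prob K l d hs * (\<Sum>t=1..T. l t (hs ! (t - 1))))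
     - Min ((\<lambda>a. \<Sum>t=1..T. l t a) ` {1..K})"

end

theory Submission
  imports Defs
begin

text \<open>Within one epoch the learner is DEW with learning rate \<open>\<eta> = 1 / (4 e \<beta>)\<close> fed only with
  feedback of delay below \<open>\<beta>\<close>. Its probabilities change by at most a factor two while a forwarded
  feedback is outstanding, so the usual potential argument on \<open>ln W\<close> goes through with the loss of
  round \<open>s\<close> compared at the round \<open>s + d s\<close> where its estimate arrives; the drift between the two
  rounds and the second moment of the estimates cost \<open>\<eta>\<close> times the number of overlapping delay
  windows, which is at most the forwarded delay. Rounds whose feedback is skipped or still
  outstanding at the end of the epoch cost at most one each. Together with the epoch condition this
  bounds the regret of epoch \<open>m\<close> by \<open>6 sqrt (2 ^ m)\<close>. The geometric sum over epochs is dominated by the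
  last one, and the last index is controlled because the previous epoch was abandoned only when its
  budget \<open>2 ^ m\<close> was exceeded.\<close>

lemma exp_1_gt_2: "exp (1::real) > 2"
  using exp_1_gt_powr[of 1] by simp

lemma exp_1_ge_2: "exp (1::real) \<ge> 2"
  using exp_1_gt_2 by simp

lemma ln_ge_half: assumes "(x::real) \<ge> 2" shows "ln x \<ge> 1/2"
proof -
  have "ln (1/2::real) \<le> 1/2 - 1" by (rule ln_le_minus_one) auto
  hence "1/2 \<le> ln (2::real)" by (simp add: ln_div)
  also have "ln 2 \<le> ln x" using assms by simp
  finally show ?thesis .
qed

lemma exp_minus_le_quadratic: fixes x::real assumes "x \<ge> 0" shows "exp (-x) \<le> 1 - x + x^2/2"
proof -
  have a: "1 + x + x^2/2 \<le> exp x" using exp_lower_Taylor_quadratic[OF assms] by simp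
  have p: "1 + x + x^2/2 > 0" using assms by (simp add: add_pos_nonneg)
  have "exp (-x) = 1 / exp x" by (simp add: exp_minus field_simps)
  also have "... \<le> 1 / (1 + x + x^2/2)" using a p by (intro divide_left_mono) auto
  also have "... \<le> 1 - x + x^2/2"
  proof -
    have "(1 - x + x^2/2) * (1 + x + x^2/2) = 1 + x^4/4"
      by (simp add: algebra_simps power2_eq_square power4_eq_xxxx)
    hence "(1 - x + x^2/2) * (1 + x + x^2/2) \<ge> 1" by simp
    thus ?thesis using p by (simp add: divide_le_eq)
  qed
  finally show ?thesis .
qed

lemma sum_sqrt_power_2_le: "(\<Sum>m\<le>M. sqrt (2 ^ m)) \<le> (2 + sqrt 2) * sqrt (2 ^ M)"
proof (induction M)
  case 0 thus ?case by simp
next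
  case (Suc M)
  have q: "sqrt (2 ^ Suc M) = sqrt 2 * sqrt (2 ^ M)" by (simp add: real_sqrt_mult)
  have "(\<Sum>m\<le>Suc M. sqrt (2 ^ m)) \<le> (2 + sqrt 2) * sqrt (2 ^ M) + sqrt 2 * sqrt (2 ^ M)"
    using Suc q by simp
  also have "... = (2 + sqrt 2) * (sqrt 2 * sqrt (2 ^ M))"
    by (simp add: algebra_simps)
  finally show ?case using q by simp
qed

lemma card_filter_eq_sum: "finite A \<Longrightarrow> card {x\<in>A. P x} = (\<Sum>x\<in>A. if P x then 1 else (0::nat))"
  by (simp add: sum.inter_filter[symmetric])

section \<open>Epochs of the doubling scheme\<close>

lemma ex_epoch_ok_singleton:
  assumes "K \<ge> 2"
  shows "\<exists>m'. m < m' \<and> epoch_ok K d m' t t"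
proof -
  define c where "c = (exp 1 * real K / 2 + real (d t)) * ln (real K)"
  obtain n::nat where n: "c < real n" using reals_Archimedean2 by blast
  define m' where "m' = Suc (max m n)"
  have "real n < 2 ^ n" by (rule of_nat_less_two_power)
  also have "(2::real) ^ n \<le> 2 ^ m'" by (intro power_increasing) (auto simp: m'_def)
  finally have c2: "c \<le> 2 ^ m'" using n by linarith
  have card1: "card {s \<in> {t..t}. real (d s) \<ge> beta K m'} \<le> 1"
    by (rule order_trans[OF card_mono[of "{t}"]]) auto
  have "(real (card {s \<in> {t..t}. real (d s) \<ge> beta K m'}))\<^sup>2 \<le> 1"
    using card1 by (simp add: power_le_one)
  also have "1 \<le> (2::real) ^ m'" by simp
  finally have A: "(real (card {s \<in> {t..t}. real (d s) \<ge> beta K m'}))\<^sup>2 \<le> 2 ^ m'" .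
  have sumle: "real (\<Sum>s \<in> {s \<in> {t..t}. real (d s) < beta K m'}. d s) \<le> real (d t)"
  proof -
    have "{s \<in> {t..t}. real (d s) < beta K m'} = (if real (d t) < beta K m' then {t} else {})" by auto
    thus ?thesis by simp
  qed
  have lnpos: "ln (real K) \<ge> 0" using assms by simp
  have "(exp 1 * real K * real (t - t + 1) / 2
            + real (\<Sum>s \<in> {s \<in> {t..t}. real (d s) < beta K m'}. d s)) * ln (real K) \<le> c"
    unfolding c_def using sumle lnpos by (intro mult_right_mono) auto
  with c2 A show ?thesis unfolding epoch_ok_def by (intro exI[of _ m']) (auto simp: m'_def)
qed

lemma epoch_Suc_cases:
  assumes "K \<ge> 2"
  shows "epoch K d (Suc t) = epoch K d t \<and> epoch_ok K d (fst (epoch K d t)) (snd (epoch K d t)) (Suc t)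
    \<or> (fst (epoch K d t) < fst (epoch K d (Suc t)) \<and> snd (epoch K d (Suc t)) = Suc t
        \<and> epoch_ok K d (fst (epoch K d (Suc t))) (Suc t) (Suc t)
        \<and> \<not> epoch_ok K d (fst (epoch K d t)) (snd (epoch K d t)) (Suc t)
        \<and> fst (epoch K d (Suc t)) = (LEAST m'. fst (epoch K d t) < m' \<and> epoch_ok K d m' (Suc t) (Suc t)))"
proof -
  obtain m r where mr: "epoch K d t = (m, r)" by fastforce
  show ?thesis
  proof (cases "epoch_ok K d m r (Suc t)")
    case True thus ?thesis using mr by simp
  next
    case False
    let ?P = "\<lambda>m'. m < m' \<and> epoch_ok K d m' (Suc t) (Suc t)"
    have ex: "\<exists>m'. ?P m'" using ex_epoch_ok_singleton[OF assms] .
    have "?P (LEAST m'. ?P m')" by (rule LeastI_ex[OF ex])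
    thus ?thesis using mr False by simp
  qed
qed

lemma epoch_start_ge_1: "snd (epoch K d t) \<ge> 1"
  by (induction t) (auto simp: Let_def split: prod.splits)

lemma epoch_start_le: "t \<ge> 1 \<Longrightarrow> snd (epoch K d t) \<le> t"
proof (induction t)
  case 0 thus ?case by simp
next
  case (Suc t)
  thus ?case by (cases "t = 0") (auto simp: Let_def split: prod.splits)
qed

lemma epoch_index_mono_Suc: "K \<ge> 2 \<Longrightarrow> fst (epoch K d t) \<le> fst (epoch K d (Suc t))"
  using epoch_Suc_cases[of K d t] by auto

lemma epoch_index_mono: assumes "K \<ge> 2" "t \<le> t'" shows "fst (epoch K d t) \<le> fst (epoch K d t')"
  using assms(2)
proof (induction t' rule: dec_induct)
  case base thus ?case by simp
next
  case (step n) thus ?case using epoch_index_mono_Suc[OF assms(1), of d n] by simp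
qed

lemma epoch_ok_current: "K \<ge> 2 \<Longrightarrow> t \<ge> 1 \<Longrightarrow> epoch_ok K d (fst (epoch K d t)) (snd (epoch K d t)) t"
proof (induction t)
  case 0 thus ?case by simp
next
  case (Suc t)
  show ?case using epoch_Suc_cases[OF Suc.prems(1), of d t] by auto
qed

lemma not_epoch_ok_0: assumes "K \<ge> 2" "r \<le> t" shows "\<not> epoch_ok K d 0 r t"
proof
  assume h: "epoch_ok K d 0 r t"
  have lnK: "ln (real K) \<ge> 1/2" using ln_ge_half[of "real K"] assms(1) by simp
  have y: "real K * real (t - r + 1) \<ge> 2 * 1"
    using assms by (intro mult_mono) auto
  have "exp 1 * (real K * real (t - r + 1)) \<ge> exp 1 * 2"
    using y by (intro mult_left_mono) auto
  moreover have "exp 1 * 2 > (4::real)" using exp_1_gt_2 by simp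
  ultimately have "exp 1 * (real K * real (t - r + 1)) > 4" by linarith
  hence a: "exp 1 * real K * real (t - r + 1) / 2 > 2" by (simp add: mult.assoc)
  have "(exp 1 * real K * real (t - r + 1) / 2
            + real (\<Sum>s \<in> {s \<in> {r..t}. real (d s) < beta K 0}. d s)) * ln (real K)
        \<ge> (exp 1 * real K * real (t - r + 1) / 2) * (1/2)"
    using lnK a by (intro mult_mono) (auto intro!: sum_nonneg add_nonneg_nonneg)
  moreover have "(exp 1 * real K * real (t - r + 1) / 2) * (1/2) > 1" using a by simp
  ultimately show False using h unfolding epoch_ok_def by simp
qed

lemma epoch_eq_within: "K \<ge> 2 \<Longrightarrow> t \<ge> 1 \<Longrightarrow> snd (epoch K d t)
    \<le> u \<Longrightarrow> u \<le> t \<Longrightarrow> epoch K d u = epoch K d t"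
proof (induction t arbitrary: u)
  case 0 thus ?case by simp
next
  case (Suc t)
  from epoch_Suc_cases[OF Suc.prems(1), of d t] show ?case
  proof (elim disjE conjE)
    assume h: "epoch K d (Suc t) = epoch K d t" "epoch_ok K d (fst (epoch K d t)) (snd (epoch K d t)) (Suc t)"
    show ?thesis
    proof (cases "u = Suc t")
      case True thus ?thesis by simp
    next
      case False
      have t1: "t \<ge> 1" using h Suc.prems epoch_start_ge_1[of K d "Suc t"] False by (cases t) auto
      thus ?thesis using Suc.IH[of u] Suc.prems h False by auto
    qed
  next
    assume "snd (epoch K d (Suc t)) = Suc t"
    thus ?thesis using Suc.prems by auto
  qed
qed

lemma epoch_index_before_start: "K \<ge> 2 \<Longrightarrow> t \<ge> 1 \<Longrightarrow>
   fst (epoch K d (snd (epoch K d t) - 1)) < fst (epoch K d t)"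
proof (induction t)
  case 0 thus ?case by simp
next
  case (Suc t)
  from epoch_Suc_cases[OF Suc.prems(1), of d t] show ?case
  proof (elim disjE conjE)
    assume h: "epoch K d (Suc t) = epoch K d t" "epoch_ok K d (fst (epoch K d t)) (snd (epoch K d t)) (Suc t)"
    show ?thesis
    proof (cases "t = 0")
      case True thus ?thesis using h not_epoch_ok_0[OF Suc.prems(1), of 1 1 d] by simp
    next
      case False thus ?thesis using Suc h by auto
    qed
  next
    assume "fst (epoch K d t) < fst (epoch K d (Suc t))" "snd (epoch K d (Suc t)) = Suc t"
    thus ?thesis by auto
  qed
qed

lemma epoch_index_le_Suc_not_ok:
  assumes K: "K \<ge> 2" and t: "t \<ge> 1"
  obtains m r where "1 \<le> r" "r \<le> snd (epoch K d t)" "fst (epoch K d t) \<le> Suc m"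
    "\<not> epoch_ok K d m r (snd (epoch K d t))"
proof -
  define r0 where "r0 = snd (epoch K d t)"
  have "r0 \<ge> 1" unfolding r0_def by (rule epoch_start_ge_1)
  then obtain p where p: "r0 = Suc p" by (cases r0) auto
  have "epoch K d r0 = epoch K d t"
    unfolding r0_def using epoch_start_le[OF t] by (intro epoch_eq_within[OF K t]) auto
  moreover have "fst (epoch K d p) < fst (epoch K d t)"
    using epoch_index_before_start[OF K t, of d] p unfolding r0_def by simp
  ultimately have fail: "\<not> epoch_ok K d (fst (epoch K d p)) (snd (epoch K d p)) r0"
    and least: "fst (epoch K d t) = (LEAST m'. fst (epoch K d p) < m' \<and> epoch_ok K d m' r0 r0)"
    using epoch_Suc_cases[OF K, of d p] unfolding p by auto
  have "snd (epoch K d p) \<le> Suc p"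
    using epoch_start_le[of p K d] by (cases "p = 0") auto
  hence start_p: "1 \<le> snd (epoch K d p)" "snd (epoch K d p) \<le> r0"
    using epoch_start_ge_1[of K d p] p by auto
  show ?thesis
  proof (cases "fst (epoch K d t) \<le> Suc (fst (epoch K d p))")
    case True thus ?thesis using that start_p fail unfolding r0_def by blast
  next
    case False
    hence "\<not> (fst (epoch K d p) < fst (epoch K d t) - 1 \<and> epoch_ok K d (fst (epoch K d t) - 1) r0 r0)"
      unfolding least by (intro not_less_Least) simp
    hence "\<not> epoch_ok K d (fst (epoch K d t) - 1) r0 r0" using False by simp
    thus ?thesis using that[of r0 "fst (epoch K d t) - 1"] unfolding r0_def
      using epoch_start_ge_1[of K d t] by simp
  qed
qed

lemma epoch_rounds_interval:
  assumes K: "K \<ge> 2" and ne: "{t\<in>{1..T}. fst (epoch K d t) = m} \<noteq> {}"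
  obtains r e where "{t\<in>{1..T}. fst (epoch K d t) = m} = {r..e}" "1 \<le> r" "r \<le> e" "e \<le> T"
    "\<And>u. u \<in> {r..e} \<Longrightarrow> epoch K d u = (m, r)" "epoch_ok K d m r e"
proof -
  define S where "S = {t\<in>{1..T}. fst (epoch K d t) = m}"
  define e where "e = Max S"
  have S: "finite S" "S \<noteq> {}" unfolding S_def using ne by auto
  have "e \<in> S" unfolding e_def using S by (rule Max_in)
  have e_max: "\<And>t. t \<in> S \<Longrightarrow> t \<le> e" unfolding e_def using S by simp
  from \<open>e \<in> S\<close> have e: "1 \<le> e" "e \<le> T" "fst (epoch K d e) = m" unfolding S_def by auto
  define r where "r = snd (epoch K d e)"
  have epoch_e: "epoch K d e = (m, r)" using e(3) unfolding r_def by (metis prod.collapse)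
  have r: "1 \<le> r" "r \<le> e" unfolding r_def using epoch_start_ge_1 epoch_start_le[OF e(1)] by auto
  have within: "epoch K d u = (m, r)" if "u \<in> {r..e}" for u
    using epoch_eq_within[OF K e(1), of d u] that epoch_e unfolding r_def by auto
  have "S = {r..e}"
  proof
    show "{r..e} \<subseteq> S" unfolding S_def using within r e by auto
  next
    show "S \<subseteq> {r..e}"
    proof
      fix t assume t: "t \<in> S"
      have "\<not> t < r"
      proof
        assume "t < r"
        hence "fst (epoch K d t) \<le> fst (epoch K d (r - 1))" by (intro epoch_index_mono[OF K]) auto
        also have "... < m" using epoch_index_before_start[OF K e(1), of d] e(3) unfolding r_def by simp
        finally show False using t unfolding S_def by simp
      qed
      thus "t \<in> {r..e}" using e_max[OF t] by simp
    qed
  qed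
  moreover have "epoch_ok K d m r e" using epoch_ok_current[OF K e(1), of d] epoch_e by simp
  ultimately show ?thesis using that r e(2) within unfolding S_def by blast
qed

section \<open>Action probabilities and expectations over histories\<close>

context fixes K :: nat and l :: "nat \<Rightarrow> nat \<Rightarrow> real" and d :: "nat \<Rightarrow> nat"
begin

definition round_prob :: "nat list \<Rightarrow> nat \<Rightarrow> nat \<Rightarrow> real" where
  "round_prob hs t = probs K l d hs t t"

lemma probs_eq_round_prob: "probs K l d hs n t = (if 1 \<le> t \<and> t \<le> n then round_prob hs t else (\<lambda>a. 0))"
proof (induction n)
  case 0 thus ?case by auto
next
  case (Suc n)
  show ?case
  proof (cases "t = Suc n")
    case True thus ?thesis by (simp add: round_prob_def)
  next
    case False thus ?thesis using Suc by auto
  qed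
qed

lemma round_prob_Suc: "round_prob hs (Suc n) = dew_prob K l d hs (probs K l d hs n) (Suc n)"
  by (simp add: round_prob_def)

lemma dew_prob_cong:
  assumes "\<And>s. 1 \<le> s \<Longrightarrow> s < t \<Longrightarrow> s + d s < t
      \<Longrightarrow> hs ! (s - 1) = hs' ! (s - 1) \<and> Q s = Q' s"
  shows "dew_prob K l d hs Q t = dew_prob K l d hs' Q' t"
proof -
  obtain m r where mr: "epoch K d t = (m, r)" by fastforce
  have r1: "r \<ge> 1" using epoch_start_ge_1[of K d t] mr by simp
  let ?recv = "{s \<in> {r..<t}. s + d s < t \<and> real (d s) < beta K m}"
  have eq: "\<And>b. (\<Sum>s\<in>?recv. if b = hs ! (s - 1) then l s b / Q s b else 0)
      = (\<Sum>s\<in>?recv. if b = hs' ! (s - 1) then l s b / Q' s b else 0)"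
    by (rule sum.cong) (use assms r1 in auto)
  show ?thesis unfolding dew_prob_def mr using eq by simp
qed

lemma round_prob_cong:
  assumes "\<And>s. 1 \<le> s \<Longrightarrow> s < t \<Longrightarrow> s + d s < t \<Longrightarrow> hs ! (s - 1) = hs' ! (s - 1)"
  shows "round_prob hs t = round_prob hs' t"
  using assms
proof (induction t rule: less_induct)
  case (less t)
  show ?case
  proof (cases t)
    case 0 thus ?thesis by (simp add: round_prob_def)
  next
    case (Suc n)
    have "dew_prob K l d hs (probs K l d hs n) (Suc n) = dew_prob K l d hs' (probs K l d hs' n) (Suc n)"
    proof (rule dew_prob_cong)
      fix s assume s: "1 \<le> s" "s < Suc n" "s + d s < Suc n"
      have "round_prob hs s = round_prob hs' s"
        by (rule less.IH) (use s less.prems Suc in auto)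
      thus "hs ! (s - 1) = hs' ! (s - 1) \<and> probs K l d hs n s = probs K l d hs' n s"
        using s less.prems Suc by (auto simp: probs_eq_round_prob)
    qed
    thus ?thesis using Suc by (simp add: round_prob_Suc)
  qed
qed

lemma dew_prob_pos_sum:
  assumes "K \<ge> 1"
  shows "dew_prob K l d hs Q t a > 0" "(\<Sum>a\<in>{1..K}. dew_prob K l d hs Q t a) = 1"
proof -
  obtain m r where mr: "epoch K d t = (m, r)" by fastforce
  define w where "w = (\<lambda>b. exp (- min (eta K m) (1 / (4 * exp 1 * beta K m)) *
     (\<Sum>s\<in>{s \<in> {r..<t}. s + d s < t \<and> real (d s) < beta K m}. if b = hs ! (s - 1) then l s b / Q s b else 0)))"
  have dp: "\<And>a. dew_prob K l d hs Q t a = w a / (\<Sum>b\<in>{1..K}. w b)"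
    unfolding dew_prob_def mr w_def by (simp add: Let_def)
  have wpos: "\<And>b. w b > 0" unfolding w_def by simp
  have spos: "(\<Sum>b\<in>{1..K}. w b) > 0" using assms wpos by (intro sum_pos) auto
  show "dew_prob K l d hs Q t a > 0" using dp wpos spos by simp
  show "(\<Sum>a\<in>{1..K}. dew_prob K l d hs Q t a) = 1" using spos by (simp add: dp sum_divide_distrib[symmetric])
qed

lemma round_prob_pos: "K \<ge> 1 \<Longrightarrow> t \<ge> 1 \<Longrightarrow> round_prob hs t a > 0"
  by (cases t) (auto simp: round_prob_Suc dew_prob_pos_sum)

lemma round_prob_sum: assumes "K \<ge> 1" "t \<ge> 1" shows "(\<Sum>a\<in>{1..K}. round_prob hs t a) = 1"
proof -
  obtain n where n: "t = Suc n" using assms(2) by (cases t) auto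
  show ?thesis unfolding n round_prob_Suc using dew_prob_pos_sum(2)[OF assms(1)] by blast
qed

lemma hist_prob_eq: "hist_prob K l d hs = (\<Prod>t\<in>{1..length hs}. round_prob hs t (hs ! (t - 1)))"
  unfolding hist_prob_def by (intro prod.cong) (auto simp: probs_eq_round_prob)

definition histories :: "nat \<Rightarrow> nat list set" where
  "histories n = {hs. length hs = n \<and> set hs \<subseteq> {1..K}}"

definition expect :: "nat \<Rightarrow> (nat list \<Rightarrow> real) \<Rightarrow> real" where
  "expect n f = (\<Sum>hs\<in>histories n. hist_prob K l d hs * f hs)"

lemma nth_history: assumes "hs \<in> histories n" "s \<in> {1..n}" shows "hs ! (s - 1) \<in> {1..K}"
proof -
  have "s - 1 < length hs" using assms by (auto simp: histories_def)
  thus ?thesis using assms nth_mem unfolding histories_def by blast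
qed

lemma hist_prob_nonneg: "K \<ge> 1 \<Longrightarrow> hist_prob K l d hs \<ge> 0"
  unfolding hist_prob_eq by (intro prod_nonneg) (auto intro!: less_imp_le[OF round_prob_pos])

lemma hist_prob_snoc: "hist_prob K l d (xs @ [b]) = hist_prob K l d xs * round_prob xs (Suc (length xs)) b"
proof -
  have pc: "\<And>t. t \<le> Suc (length xs) \<Longrightarrow> round_prob (xs @ [b]) t = round_prob xs t"
    by (rule round_prob_cong) (auto simp: nth_append)
  have "hist_prob K l d (xs @ [b]) = (\<Prod>t\<in>{1..Suc (length xs)}. round_prob (xs @ [b]) t ((xs @ [b]) ! (t - 1)))"
    by (simp add: hist_prob_eq)
  also have "... = (\<Prod>t\<in>{1..Suc (length xs)}. round_prob xs t ((xs @ [b]) ! (t - 1)))"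
    by (intro prod.cong) (auto simp: pc)
  also have "... = (\<Prod>t\<in>{1..length xs}. round_prob xs t ((xs @ [b]) ! (t - 1))) * round_prob xs (Suc (length xs)) b"
    by (simp add: nth_append)
  also have "(\<Prod>t\<in>{1..length xs}. round_prob xs t ((xs @ [b]) ! (t - 1))) = hist_prob K l d xs"
    unfolding hist_prob_eq by (intro prod.cong) (auto simp: nth_append)
  finally show ?thesis .
qed

lemma sum_histories_Suc: "(\<Sum>hs\<in>histories (Suc n). f hs) = (\<Sum>xs\<in>histories n. \<Sum>b\<in>{1..K}. f (xs @ [b]))"
proof -
  have "(\<Sum>xs\<in>histories n. \<Sum>b\<in>{1..K}. f (xs @ [b])) = (\<Sum>p\<in>histories n \<times> {1..K}. f (fst p @ [snd p]))"
    by (subst sum.cartesian_product) (simp add: case_prod_beta)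
  also have "... = (\<Sum>hs\<in>histories (Suc n). f hs)"
  proof (rule sum.reindex_bij_witness[of _ "\<lambda>hs. (butlast hs, last hs)" "\<lambda>p. fst p @ [snd p]"])
    fix p assume "p \<in> histories n \<times> {1..K}"
    thus "(butlast (fst p @ [snd p]), last (fst p @ [snd p])) = p" by auto
  next
    fix p assume "p \<in> histories n \<times> {1..K}"
    thus "fst p @ [snd p] \<in> histories (Suc n)" by (auto simp: histories_def)
  next
    fix hs assume h: "hs \<in> histories (Suc n)"
    hence "hs \<noteq> []" by (auto simp: histories_def)
    thus "fst (butlast hs, last hs) @ [snd (butlast hs, last hs)] = hs" by simp
  next
    fix hs assume h: "hs \<in> histories (Suc n)"
    hence ne: "hs \<noteq> []" and len: "length hs = Suc n" and st: "set hs \<subseteq> {1..K}" by (auto simp: histories_def)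
    have "set (butlast hs) \<subseteq> {1..K}" using st by (meson in_set_butlastD subset_iff)
    moreover have "last hs \<in> {1..K}" using st ne last_in_set[OF ne] by blast
    ultimately show "(butlast hs, last hs) \<in> histories n \<times> {1..K}" using len by (auto simp: histories_def)
  qed simp
  finally show ?thesis by simp
qed

lemma expect_Suc_take:
  assumes "K \<ge> 1" "n \<le> N"
  shows "expect (Suc N) (\<lambda>hs. f (take n hs)) = expect N (\<lambda>hs. f (take n hs))"
proof -
  have "expect (Suc N) (\<lambda>hs. f (take n hs)) =
      (\<Sum>xs\<in>histories N. \<Sum>b\<in>{1..K}. hist_prob K l d xs * round_prob xs (Suc (length xs)) b * f (take n (xs @ [b])))"
    unfolding expect_def sum_histories_Suc hist_prob_snoc ..
  also have "... = (\<Sum>xs\<in>histories N. hist_prob K l d xs * f (take n xs) * (\<Sum>b\<in>{1..K}. round_prob xs (Suc (length xs)) b))"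
  proof (intro sum.cong refl)
    fix xs assume "xs \<in> histories N"
    hence "length xs = N" by (simp add: histories_def)
    hence "\<And>b. take n (xs @ [b]) = take n xs" using assms by simp
    thus "(\<Sum>b\<in>{1..K}. hist_prob K l d xs * round_prob xs (Suc (length xs)) b * f (take n (xs @ [b]))) =
       hist_prob K l d xs * f (take n xs) * (\<Sum>b\<in>{1..K}. round_prob xs (Suc (length xs)) b)"
      by (simp add: sum_distrib_left mult_ac)
  qed
  also have "... = expect N (\<lambda>hs. f (take n hs))"
    unfolding expect_def using round_prob_sum[OF assms(1)] by simp
  finally show ?thesis .
qed

lemma expect_take:
  assumes "K \<ge> 1" "n \<le> N"
  shows "expect N (\<lambda>hs. f (take n hs)) = expect n f"
  using assms(2)
proof (induction N rule: dec_induct)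
  case base
  show ?case unfolding expect_def by (intro sum.cong) (auto simp: histories_def)
next
  case (step N)
  thus ?case using expect_Suc_take[OF assms(1), of n N f] by simp
qed

lemma expect_take':
  assumes "K \<ge> 1" "n \<le> N" "\<And>hs. hs \<in> histories N \<Longrightarrow> F hs = f (take n hs)"
  shows "expect N F = expect n f"
proof -
  have "expect N F = expect N (\<lambda>hs. f (take n hs))" unfolding expect_def using assms(3) by (intro sum.cong) auto
  thus ?thesis using expect_take[OF assms(1,2)] by simp
qed

lemma expect_const: assumes "K \<ge> 1" shows "expect N (\<lambda>hs. c) = c"
proof -
  have "expect N (\<lambda>hs. c) = expect 0 (\<lambda>hs. c)" using expect_take[OF assms, of 0 N "\<lambda>hs. c"] by simp
  also have "histories 0 = {[]}" by (auto simp: histories_def)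
  hence "expect 0 (\<lambda>hs. c) = c" by (simp add: expect_def hist_prob_def)
  finally show ?thesis .
qed

lemma expect_add: "expect n (\<lambda>hs. f hs + g hs) = expect n f + expect n g"
  unfolding expect_def by (simp add: distrib_left sum.distrib)

lemma expect_diff: "expect n (\<lambda>hs. f hs - g hs) = expect n f - expect n g"
  unfolding expect_def by (simp add: right_diff_distrib sum_subtractf)

lemma expect_cmult: "expect n (\<lambda>hs. c * f hs) = c * expect n f"
  unfolding expect_def by (simp add: sum_distrib_left mult_ac)

lemma expect_sum: "expect n (\<lambda>hs. \<Sum>i\<in>I. f i hs) = (\<Sum>i\<in>I. expect n (f i))"
  unfolding expect_def by (simp add: sum_distrib_left sum.swap[of _ I])

lemma expect_mono: "K \<ge> 1 \<Longrightarrow> (\<And>hs. hs \<in> histories n \<Longrightarrow> f hs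
    \<le> g hs) \<Longrightarrow> expect n f \<le> expect n g"
  unfolding expect_def by (intro sum_mono mult_left_mono) (auto intro: hist_prob_nonneg)

lemma expect_cong: "(\<And>hs. hs \<in> histories n \<Longrightarrow> f hs = g hs) \<Longrightarrow> expect n f = expect n g"
  unfolding expect_def by (intro sum.cong) auto

lemma round_prob_take: "u \<le> n \<Longrightarrow> round_prob (take n hs) u = round_prob hs u"
  by (rule round_prob_cong) auto

lemma round_prob_update: "1 \<le> s \<Longrightarrow> u \<le> s + d s \<Longrightarrow> round_prob (hs[s - 1 := b]) u = round_prob hs u"
proof (rule round_prob_cong)
  fix s' assume a: "1 \<le> s" "u \<le> s + d s" "1 \<le> s'" "s' < u" "s' + d s' < u"
  hence "s' \<noteq> s" by auto
  hence "s' - 1 \<noteq> s - 1" using a by arith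
  thus "hs[s - 1 := b] ! (s' - 1) = hs ! (s' - 1)" by simp
qed

lemma round_prob_update': "1 \<le> s \<Longrightarrow> u \<le> s + d s
    \<Longrightarrow> round_prob (hs[s - Suc 0 := b]) u = round_prob hs u"
  using round_prob_update[of s u hs b] by simp

lemma sum_histories_split:
  assumes "1 \<le> s" "s \<le> n" "K \<ge> 1"
  shows "(\<Sum>hs\<in>histories n. f hs) = (\<Sum>hs\<in>{hs\<in>histories n. hs ! (s - 1) = 1}. \<Sum>b\<in>{1..K}. f (hs[s - 1 := b]))"
proof -
  let ?H1 = "{hs\<in>histories n. hs ! (s - 1) = 1}"
  have "(\<Sum>hs\<in>?H1. \<Sum>b\<in>{1..K}. f (hs[s - 1 := b])) = (\<Sum>p\<in>?H1 \<times> {1..K}. f ((fst p)[s - 1 := snd p]))"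
    by (subst sum.cartesian_product) (simp add: case_prod_beta)
  also have "... = (\<Sum>hs\<in>histories n. f hs)"
  proof (rule sum.reindex_bij_witness[of _ "\<lambda>hs. (hs[s - 1 := 1], hs ! (s - 1))" "\<lambda>p. (fst p)[s - 1 := snd p]"])
    fix p assume p: "p \<in> ?H1 \<times> {1..K}"
    obtain hs b where pe: "p = (hs, b)" by fastforce
    have len: "length hs = n" and h1: "hs ! (s - 1) = 1" using p pe by (auto simp: histories_def)
    have lt: "s - 1 < length hs" using assms len by simp
    show "(((fst p)[s - 1 := snd p])[s - 1 := 1], ((fst p)[s - 1 := snd p]) ! (s - 1)) = p"
    proof -
      have "hs[s - 1 := 1] = hs" by (metis list_update_id h1)
      thus ?thesis using pe lt by simp
    qed
    have "set (hs[s - 1 := b]) \<subseteq> insert b (set hs)" by (rule set_update_subset_insert)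
    thus "(fst p)[s - 1 := snd p] \<in> histories n" using p pe by (auto simp: histories_def)
  next
    fix hs assume h: "hs \<in> histories n"
    have lt: "s - 1 < length hs" using assms h by (simp add: histories_def)
    show "(fst (hs[s - 1 := 1], hs ! (s - 1)))[s - 1 := snd (hs[s - 1 := 1], hs ! (s - 1))] = hs"
      using lt by simp
    have "set (hs[s - 1 := 1]) \<subseteq> insert 1 (set hs)" by (rule set_update_subset_insert)
    moreover have "hs ! (s - 1) \<in> {1..K}" using h nth_mem[OF lt] unfolding histories_def by blast
    moreover have "1 \<in> {1..K}" using assms by simp
    ultimately show "(hs[s - 1 := 1], hs ! (s - 1)) \<in> ?H1 \<times> {1..K}"
      using h lt by (auto simp: histories_def)
  qed simp
  finally show ?thesis by simp
qed

lemma hist_prob_update: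
  assumes "hs \<in> histories n" "1 \<le> s" "s \<le> n" "n \<le> s + d s"
  shows "hist_prob K l d (hs[s - 1 := b]) = round_prob hs s b * (\<Prod>t\<in>{1..n} - {s}. round_prob hs t (hs ! (t - 1)))"
proof -
  have len: "length hs = n" using assms by (simp add: histories_def)
  have "hist_prob K l d (hs[s - 1 := b]) = (\<Prod>t\<in>{1..n}. round_prob (hs[s - 1 := b]) t (hs[s - 1 := b] ! (t - 1)))"
    by (simp add: hist_prob_eq len)
  also have "... = (\<Prod>t\<in>{1..n}. round_prob hs t (hs[s - 1 := b] ! (t - 1)))"
    using assms by (intro prod.cong refl) (simp add: round_prob_update')
  also have "... = round_prob hs s (hs[s - 1 := b] ! (s - 1)) * (\<Prod>t\<in>{1..n} - {s}. round_prob hs t (hs[s - 1 := b] ! (t - 1)))"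
    using assms by (intro prod.remove) auto
  also have "(\<Prod>t\<in>{1..n} - {s}. round_prob hs t (hs[s - 1 := b] ! (t - 1)))
      = (\<Prod>t\<in>{1..n} - {s}. round_prob hs t (hs ! (t - 1)))"
    using assms by (intro prod.cong refl) auto
  finally show ?thesis using assms len by simp
qed

lemma expect_eq_sum_action:
  assumes K_ge_1: "K \<ge> 1" and s: "1 \<le> s" "s \<le> n" "n \<le> s + d s"
  shows "expect n F = (\<Sum>hs\<in>{hs\<in>histories n. hs ! (s - 1) = 1}.
    (\<Prod>t\<in>{1..n} - {s}. round_prob hs t (hs ! (t - 1))) * (\<Sum>b\<in>{1..K}. round_prob hs s b * F (hs[s - 1 := b])))"
  unfolding expect_def sum_histories_split[OF s(1,2) K_ge_1]
proof (intro sum.cong refl)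
  fix hs assume "hs \<in> {hs\<in>histories n. hs ! (s - 1) = 1}"
  hence hs: "hs \<in> histories n" by simp
  show "(\<Sum>b\<in>{1..K}. hist_prob K l d (hs[s - 1 := b]) * F (hs[s - 1 := b]))
    = (\<Prod>t\<in>{1..n} - {s}. round_prob hs t (hs ! (t - 1))) * (\<Sum>b\<in>{1..K}. round_prob hs s b * F (hs[s - 1 := b]))"
    unfolding hist_prob_update[OF hs s] sum_distrib_left by (intro sum.cong refl) (simp add: mult_ac)
qed

text \<open>Round \<open>s\<close> influences no probability before round \<open>s + d s\<close>, when its feedback arrives;
  so up to that horizon the importance-weighted indicator of its action has the same expectation as
  any quantity that ignores that action.\<close>
lemma expect_importance_weight:
  assumes K_ge_1: "K \<ge> 1" and s: "1 \<le> s" "s \<le> n" "n \<le> s + d s" and a: "a \<in> {1..K}"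
    and G: "\<And>hs b. hs \<in> histories n \<Longrightarrow> b \<in> {1..K} \<Longrightarrow> G (hs[s - 1 := b]) = G hs"
  shows "expect n (\<lambda>hs. if hs ! (s - 1) = a then G hs / round_prob hs s a else 0) = expect n G"
proof -
  have same_prob: "round_prob (hs[s - Suc 0 := b]) s = round_prob hs s" for hs b
    using s by (intro round_prob_update') auto
  have weighted: "(\<Sum>b\<in>{1..K}. round_prob hs s b * (if hs[s - 1 := b] ! (s - 1) = a
        then G (hs[s - 1 := b]) / round_prob (hs[s - 1 := b]) s a else 0)) = G hs"
    if hs: "hs \<in> histories n" for hs
  proof -
    have "s - 1 < length hs" using s hs by (simp add: histories_def)
    moreover have "round_prob hs s a > 0" using round_prob_pos K_ge_1 s by auto
    ultimately show ?thesis
      using a G[OF hs a] by (simp add: same_prob if_distrib[of "\<lambda>x. _ * x"] sum.delta cong: if_cong)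
  qed
  have plain: "(\<Sum>b\<in>{1..K}. round_prob hs s b * G (hs[s - 1 := b])) = G hs" if hs: "hs \<in> histories n" for hs
    using G[OF hs] round_prob_sum[OF K_ge_1 s(1)] by (simp add: sum_distrib_right[symmetric])
  show ?thesis
    unfolding expect_eq_sum_action[OF K_ge_1 s] using weighted plain by (intro sum.cong refl) auto
qed

lemma expect_importance_weight_take:
  assumes K_ge_1: "K \<ge> 1" and s: "1 \<le> s" "s \<le> n" "n \<le> T" "n \<le> s + d s" and a: "a \<in> {1..K}"
    and G: "\<And>hs b. hs \<in> histories n \<Longrightarrow> b \<in> {1..K} \<Longrightarrow> G (hs[s - 1 := b]) = G hs"
    and F: "\<And>hs. hs \<in> histories T \<Longrightarrow> F hs = G (take n hs)"
    and F': "\<And>hs. hs \<in> histories T \<Longrightarrow> F' hs = (if hs ! (s - 1) = a then F hs / round_prob hs s a else 0)"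
  shows "expect T F' = expect T F"
proof -
  have "expect T F' = expect n (\<lambda>hs. if hs ! (s - 1) = a then G hs / round_prob hs s a else 0)"
  proof (rule expect_take'[OF K_ge_1 s(3)])
    fix hs assume hs: "hs \<in> histories T"
    have "s - 1 < n" using s by simp
    hence "take n hs ! (s - 1) = hs ! (s - 1)" by simp
    moreover have "round_prob (take n hs) s = round_prob hs s" using s by (intro round_prob_take) simp
    ultimately show "F' hs = (if take n hs ! (s - 1) = a then G (take n hs) / round_prob (take n hs) s a else 0)"
      using F'[OF hs] F[OF hs] by simp
  qed
  also have "... = expect n G" by (rule expect_importance_weight[OF K_ge_1 s(1,2,4) a G])
  also have "... = expect T F" using F by (intro expect_take'[OF K_ge_1 s(3), symmetric]) auto
  finally show ?thesis .
qed

end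

section \<open>A single epoch: exponential weights\<close>

text \<open>Its copy of DEW effectively uses the learning rate \<open>\<eta>\<^sub>m\<close> (the cap \<open>1 / (4 e \<beta>\<^sub>m)\<close>
  equals \<open>\<eta>\<^sub>m\<close>), and only rounds with delay below \<open>\<beta>\<^sub>m\<close> are forwarded. The batch
  \<open>batch_est hs u\<close> collects the loss estimates whose feedback arrives at the end of round \<open>u\<close>.\<close>
locale dew_epoch =
  fixes K :: nat and l :: "nat \<Rightarrow> nat \<Rightarrow> real" and d :: "nat \<Rightarrow> nat" and T m r e :: nat
  assumes K_ge_2: "K \<ge> 2"
    and loss_bounded: "\<And>t a. t \<in> {1..T} \<Longrightarrow> a \<in> {1..K} \<Longrightarrow> 0 \<le> l t a \<and> l t a \<le> 1"
    and start_ge_1: "1 \<le> r" and start_le_end: "r \<le> e" and end_le_T: "e \<le> T"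
    and epoch_eq: "\<And>u. u \<in> {r..e} \<Longrightarrow> epoch K d u = (m, r)"
    and budget_ok: "epoch_ok K d m r e"
begin

abbreviation prob :: "nat list \<Rightarrow> nat \<Rightarrow> nat \<Rightarrow> real" where
  "prob \<equiv> round_prob K l d"

definition forwarded :: "nat \<Rightarrow> bool" where
  "forwarded s \<longleftrightarrow> real (d s) < beta K m"

definition received :: "nat \<Rightarrow> nat set" where
  "received t = {s \<in> {r..<t}. s + d s < t \<and> forwarded s}"

definition arrivals :: "nat \<Rightarrow> nat set" where
  "arrivals u = {s \<in> {r..u}. s + d s = u \<and> forwarded s}"

definition loss_est :: "nat list \<Rightarrow> nat \<Rightarrow> nat \<Rightarrow> real" where
  "loss_est hs s b = (if b = hs ! (s - 1) then l s b / prob hs s b else 0)"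

definition weight :: "nat list \<Rightarrow> nat \<Rightarrow> nat \<Rightarrow> real" where
  "weight hs t b = exp (- eta K m * (\<Sum>s\<in>received t. loss_est hs s b))"

definition total_weight :: "nat list \<Rightarrow> nat \<Rightarrow> real" where
  "total_weight hs t = (\<Sum>b\<in>{1..K}. weight hs t b)"

definition batch_est :: "nat list \<Rightarrow> nat \<Rightarrow> nat \<Rightarrow> real" where
  "batch_est hs u b = (\<Sum>s\<in>arrivals u. loss_est hs s b)"

definition batch_mean :: "nat list \<Rightarrow> nat \<Rightarrow> real" where
  "batch_mean hs u = (\<Sum>b\<in>{1..K}. prob hs u b * batch_est hs u b)"

definition batch_second_moment :: "nat list \<Rightarrow> nat \<Rightarrow> real" where
  "batch_second_moment hs u = (\<Sum>b\<in>{1..K}. prob hs u b * (batch_est hs u b)^2)"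

lemma K_ge_1: "K \<ge> 1" using K_ge_2 by simp
lemma ln_K_pos: "ln (real K) > 0" using K_ge_2 by simp
lemma beta_pos: "beta K m > 0" unfolding beta_def using ln_K_pos by simp
lemma eta_pos: "eta K m > 0" unfolding eta_def using beta_pos by simp
lemma eta_eq: "eta K m = ln (real K) / sqrt (2 ^ m)"
  unfolding eta_def beta_def by simp

lemma finite_received: "finite (received t)" unfolding received_def by simp
lemma finite_arrivals: "finite (arrivals u)" unfolding arrivals_def by simp

lemma arrivalsD: "s \<in> arrivals u \<Longrightarrow> s \<in> {r..u} \<and> s + d s = u \<and> forwarded s" unfolding arrivals_def by auto

lemma round_prob_eq_weight: assumes "u \<in> {r..e}" shows "prob hs u b = weight hs u b / total_weight hs u"
proof -
  obtain n where n: "u = Suc n" using assms start_ge_1 by (cases u) auto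
  have e: "epoch K d (Suc n) = (m, r)" using epoch_eq[OF assms] n by simp
  have mn: "min (eta K m) (1 / (4 * exp 1 * beta K m)) = eta K m" by (simp add: eta_def)
  have recv: "{s \<in> {r..<Suc n}. s + d s < Suc n \<and> real (d s) < beta K m} = received u"
    unfolding received_def forwarded_def n ..
  have sc: "\<And>b. (\<Sum>s\<in>received u. if b = hs ! (s - 1) then l s b / probs K l d hs n s b else 0)
      = (\<Sum>s\<in>received u. loss_est hs s b)"
    by (intro sum.cong refl) (use start_ge_1 in \<open>auto simp: loss_est_def probs_eq_round_prob received_def n\<close>)
  define w where "w b = exp (- min (eta K m) (1 / (4 * exp 1 * beta K m)) *
     (\<Sum>s\<in>{s \<in> {r..<Suc n}. s + d s < Suc n \<and> real (d s) < beta K m}. if b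
         = hs ! (s - 1) then l s b / probs K l d hs n s b else 0))" for b
  have dp: "dew_prob K l d hs (probs K l d hs n) (Suc n) b = w b / (\<Sum>b\<in>{1..K}. w b)"
    unfolding dew_prob_def e w_def by (simp add: Let_def)
  have ww: "w = weight hs u"
  proof
    fix b show "w b = weight hs u b" unfolding w_def weight_def mn recv using sc[of b] n by simp
  qed
  show ?thesis unfolding n round_prob_Suc dp ww total_weight_def n ..
qed

lemma received_Suc: "r \<le> u \<Longrightarrow> received (Suc u) = received u \<union> arrivals u"
  unfolding received_def arrivals_def by auto

lemma received_arrivals_disjoint: "received u \<inter> arrivals u = {}"
  unfolding received_def arrivals_def by auto

lemma received_start: "received r = {}" unfolding received_def by auto

lemma weight_Suc: "r \<le> u \<Longrightarrow> weight hs (Suc u) b = weight hs u b * exp (- eta K m * batch_est hs u b)"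
  unfolding weight_def batch_est_def received_Suc
  by (simp add: sum.union_disjoint finite_received finite_arrivals received_arrivals_disjoint distrib_left exp_add[symmetric])

lemma weight_pos: "weight hs t b > 0" unfolding weight_def by simp
lemma total_weight_pos: "total_weight hs t > 0" unfolding total_weight_def using K_ge_1 weight_pos by (intro sum_pos) auto
lemma total_weight_start: "total_weight hs r = real K" unfolding total_weight_def weight_def received_start by simp

lemma loss_est_nonneg: assumes "hs \<in> histories K T" "s \<in> {1..T}" shows "0 \<le> loss_est hs s b"
proof -
  have "hs ! (s - 1) \<in> {1..K}" using assms by (rule nth_history)
  moreover have "prob hs s (hs ! (s - 1)) > 0" by (rule round_prob_pos) (use K_ge_1 assms in auto)
  ultimately show ?thesis using assms loss_bounded[of s "hs ! (s - 1)"] unfolding loss_est_def by auto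
qed

lemma arrivals_subset: "u \<le> e \<Longrightarrow> arrivals u \<subseteq> {r..e}" unfolding arrivals_def by auto
lemma epoch_round_le_horizon: "s \<in> {r..e} \<Longrightarrow> s \<in> {1..T}" using start_ge_1 end_le_T by auto

lemma batch_est_nonneg: "hs \<in> histories K T \<Longrightarrow> u \<le> e \<Longrightarrow> 0 \<le> batch_est hs u b"
  unfolding batch_est_def using arrivals_subset loss_est_nonneg epoch_round_le_horizon by (intro sum_nonneg) blast

lemma sum_loss_est: assumes "hs \<in> histories K T" "s \<in> {1..T}"
  shows "(\<Sum>b\<in>{1..K}. f b * loss_est hs s b) = f (hs ! (s - 1)) * l s (hs ! (s - 1)) / prob hs s (hs ! (s - 1))"
  using nth_history[OF assms] unfolding loss_est_def
  by (simp add: if_distrib[of "\<lambda>x. f _ * x"] sum.delta' cong: if_cong)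

lemma total_weight_Suc_le: assumes "hs \<in> histories K T" "u \<in> {r..e}"
  shows "total_weight hs (Suc u) \<le> total_weight hs u * (1 - eta K m * batch_mean hs u + (eta K m)^2 / 2 * batch_second_moment hs u)"
proof -
  have "total_weight hs (Suc u) = (\<Sum>b\<in>{1..K}. weight hs u b * exp (- (eta K m * batch_est hs u b)))"
    unfolding total_weight_def using assms by (simp add: weight_Suc)
  also have "... \<le> (\<Sum>b\<in>{1..K}. weight hs u b * (1 - eta K m * batch_est hs u b + (eta K m * batch_est hs u b)^2/2))"
  proof (intro sum_mono mult_left_mono)
    fix b show "exp (- (eta K m * batch_est hs u b)) \<le> 1 - eta K m * batch_est hs u b + (eta K m * batch_est hs u b)^2/2"
      using batch_est_nonneg[OF assms(1)] assms eta_pos by (intro exp_minus_le_quadratic) auto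
  qed (simp add: less_imp_le[OF weight_pos])
  also have "... = (\<Sum>b\<in>{1..K}. total_weight hs u * prob hs u b * (1 - eta K m * batch_est hs u b
      + (eta K m * batch_est hs u b)^2/2))"
  proof (intro sum.cong refl)
    fix b
    have Wne: "total_weight hs u \<noteq> 0" using total_weight_pos[of hs u] by simp
    show "weight hs u b * (1 - eta K m * batch_est hs u b + (eta K m * batch_est hs u b)^2/2) =
       total_weight hs u * prob hs u b * (1 - eta K m * batch_est hs u b + (eta K m * batch_est hs u b)^2/2)"
      using Wne by (simp add: round_prob_eq_weight[OF assms(2)])
  qed
  also have "... = total_weight hs u * (1 - eta K m * batch_mean hs u + (eta K m)^2 / 2 * batch_second_moment hs u)"
    unfolding batch_mean_def batch_second_moment_def using round_prob_sum[OF K_ge_1, where hs=hs and t=u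
        and l=l and d=d] assms(2) start_ge_1
    by (simp add: algebra_simps sum.distrib sum_subtractf sum_distrib_left sum_divide_distrib power_mult_distrib
         sum_distrib_right[symmetric])
  finally show ?thesis .
qed

lemma ln_total_weight_Suc_le:
  assumes hs: "hs \<in> histories K T" and u: "u \<in> {r..e}"
  shows "ln (total_weight hs (Suc u)) - ln (total_weight hs u)
    \<le> - eta K m * batch_mean hs u + (eta K m)^2/2 * batch_second_moment hs u"
proof -
  let ?y = "1 - eta K m * batch_mean hs u + (eta K m)^2 / 2 * batch_second_moment hs u"
  have W: "total_weight hs (Suc u) \<le> total_weight hs u * ?y" using total_weight_Suc_le[OF hs u] .
  have y: "?y > 0"
  proof (rule ccontr)
    assume "\<not> ?y > 0"
    hence "total_weight hs u * ?y \<le> 0" using total_weight_pos[of hs u] by (simp add: mult_nonneg_nonpos)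
    thus False using W total_weight_pos[of hs "Suc u"] by linarith
  qed
  have "ln (total_weight hs (Suc u)) \<le> ln (total_weight hs u * ?y)" using W total_weight_pos[of hs "Suc u"] by simp
  also have "... = ln (total_weight hs u) + ln ?y" using total_weight_pos[of hs u] y by (simp add: ln_mult)
  also have "ln ?y \<le> ?y - 1" using y by (rule ln_le_minus_one)
  finally show ?thesis by simp
qed

text \<open>The potential \<open>ln W\<close> starts at \<open>ln K\<close>, decreases by about \<open>\<eta>\<close> times the played
  loss estimate per round, and stays above \<open>ln w\<^sub>a = -\<eta> L\<^sub>a\<close>.\<close>
lemma potential_bound: assumes hs: "hs \<in> histories K T" and a: "a \<in> {1..K}"
  shows "(\<Sum>u\<in>{r..e}. batch_mean hs u) \<le> ln (real K) / eta K m + (\<Sum>s\<in>received (Suc e). loss_est hs s a)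
           + eta K m / 2 * (\<Sum>u\<in>{r..e}. batch_second_moment hs u)"
proof -
  let ?\<eta> = "eta K m"
  have "ln (total_weight hs (Suc e)) - ln (real K)
      = (\<Sum>u\<in>{r..e}. ln (total_weight hs (Suc u)) - ln (total_weight hs u))"
    using sum_Suc_diff[of r e "\<lambda>u. ln (total_weight hs u)"] start_le_end by (simp add: total_weight_start)
  also have "... \<le> (\<Sum>u\<in>{r..e}. - ?\<eta> * batch_mean hs u + ?\<eta>^2/2 * batch_second_moment hs u)"
    by (intro sum_mono ln_total_weight_Suc_le[OF hs])
  also have "... = - ?\<eta> * (\<Sum>u\<in>{r..e}. batch_mean hs u) + ?\<eta>^2/2 * (\<Sum>u\<in>{r..e}. batch_second_moment hs u)"
    by (simp add: sum.distrib[symmetric] sum_distrib_left)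
  finally have upper: "ln (total_weight hs (Suc e)) - ln (real K)
      \<le> - ?\<eta> * (\<Sum>u\<in>{r..e}. batch_mean hs u) + ?\<eta>^2/2 * (\<Sum>u\<in>{r..e}. batch_second_moment hs u)" .
  have "weight hs (Suc e) a \<le> total_weight hs (Suc e)"
    unfolding total_weight_def using a by (intro member_le_sum) (auto intro: less_imp_le[OF weight_pos])
  hence "ln (weight hs (Suc e) a) \<le> ln (total_weight hs (Suc e))" using weight_pos[of hs "Suc e" a] by simp
  hence lower: "- ?\<eta> * (\<Sum>s\<in>received (Suc e). loss_est hs s a) \<le> ln (total_weight hs (Suc e))"
    by (simp add: weight_def)
  have "?\<eta> * (\<Sum>u\<in>{r..e}. batch_mean hs u) \<le> ln (real K) + ?\<eta> * (\<Sum>s\<in>received (Suc e). loss_est hs s a)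
      + ?\<eta>^2/2 * (\<Sum>u\<in>{r..e}. batch_second_moment hs u)"
    using upper lower by linarith
  also have "... = ?\<eta> * (ln (real K) / ?\<eta> + (\<Sum>s\<in>received (Suc e). loss_est hs s a)
      + ?\<eta> / 2 * (\<Sum>u\<in>{r..e}. batch_second_moment hs u))"
    using eta_pos by (simp add: field_simps power2_eq_square)
  finally show ?thesis using eta_pos by (simp add: mult_le_cancel_left_pos)
qed

definition delay_cap :: nat where "delay_cap = nat \<lceil>beta K m\<rceil>"

lemma forwarded_iff: "forwarded s \<longleftrightarrow> d s < delay_cap"
proof -
  have "forwarded s \<longleftrightarrow> int (d s) < \<lceil>beta K m\<rceil>" unfolding forwarded_def by (simp add: less_ceiling_iff)
  also have "... \<longleftrightarrow> d s < delay_cap" unfolding delay_cap_def using beta_pos by linarith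
  finally show ?thesis .
qed

lemma delay_cap_less: "real delay_cap - 1 < beta K m"
proof -
  have "real delay_cap = of_int \<lceil>beta K m\<rceil>" unfolding delay_cap_def using beta_pos by simp
  thus ?thesis using ceiling_correct[of "beta K m"] by simp
qed

lemma weight_antimono: assumes hs: "hs \<in> histories K T" and "r \<le> u" "u \<le> v" "v \<le> Suc e"
  shows "weight hs v b \<le> weight hs u b"
  using assms(3,4)
proof (induction v rule: dec_induct)
  case base show ?case by simp
next
  case (step v)
  have "weight hs (Suc v) b = weight hs v b * exp (- eta K m * batch_est hs v b)" using assms(2) step by (simp add: weight_Suc)
  also have "... \<le> weight hs v b * 1"
    using batch_est_nonneg[OF hs, of v b] step eta_pos
    by (intro mult_left_mono) (auto intro: less_imp_le[OF weight_pos])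
  finally show ?case using step by simp
qed

lemma total_weight_antimono_Suc: assumes hs: "hs \<in> histories K T" and "r \<le> v" "v \<le> e"
    shows "total_weight hs (Suc v) \<le> total_weight hs v"
  unfolding total_weight_def using weight_antimono[OF hs, of v "Suc v"] assms by (intro sum_mono) auto

lemma total_weight_Suc_ge: assumes hs: "hs \<in> histories K T" and u: "u \<in> {r..e}"
  shows "total_weight hs u * (1 - eta K m * batch_mean hs u) \<le> total_weight hs (Suc u)"
proof -
  have "total_weight hs u * (1 - eta K m * batch_mean hs u) = (\<Sum>b\<in>{1..K}. weight hs u b * (1 - eta K m * batch_est hs u b))"
  proof -
    have Wne: "total_weight hs u \<noteq> 0" using total_weight_pos[of hs u] by simp
    have "(\<Sum>b\<in>{1..K}. weight hs u b * (1 - eta K m * batch_est hs u b))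
        = (\<Sum>b\<in>{1..K}. total_weight hs u * prob hs u b * (1 - eta K m * batch_est hs u b))"
      using Wne by (intro sum.cong refl) (simp add: round_prob_eq_weight[OF u])
    also have "... = total_weight hs u * (1 - eta K m * batch_mean hs u)"
      unfolding batch_mean_def using round_prob_sum[OF K_ge_1, where hs=hs and t=u and l=l and d=d] u start_ge_1
      by (simp add: algebra_simps sum_subtractf sum_distrib_left sum_distrib_right[symmetric])
    finally show ?thesis by simp
  qed
  also have "... \<le> (\<Sum>b\<in>{1..K}. weight hs u b * exp (- (eta K m * batch_est hs u b)))"
    by (intro sum_mono mult_left_mono) (auto intro: less_imp_le[OF weight_pos] simp: exp_ge_add_one_self[of "- _", simplified])
  also have "... = total_weight hs (Suc u)" unfolding total_weight_def using u by (simp add: weight_Suc)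
  finally show ?thesis .
qed

lemma batch_mean_eq: assumes hs: "hs \<in> histories K T" and u: "u \<le> e"
  shows "batch_mean hs u = (\<Sum>s\<in>arrivals u. prob hs u (hs ! (s - 1)) * l s (hs ! (s - 1)) / prob hs s (hs ! (s - 1)))"
proof -
  have "batch_mean hs u = (\<Sum>s\<in>arrivals u. \<Sum>b\<in>{1..K}. prob hs u b * loss_est hs s b)"
    unfolding batch_mean_def batch_est_def by (simp add: sum_distrib_left) (rule sum.swap)
  also have "... = (\<Sum>s\<in>arrivals u. prob hs u (hs ! (s - 1)) * l s (hs ! (s - 1)) / prob hs s (hs ! (s - 1)))"
    using arrivals_subset[OF u] epoch_round_le_horizon by (intro sum.cong refl sum_loss_est[OF hs]) blast
  finally show ?thesis .
qed

lemma arrivals_disjoint: "u \<noteq> v \<Longrightarrow> arrivals u \<inter> arrivals v = {}" unfolding arrivals_def by auto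

text \<open>Every round arriving in \<open>[s, t)\<close> lies in the open window of radius \<open>delay_cap\<close>
  around \<open>s\<close>.\<close>
lemma card_arrivals_window: assumes s: "s \<in> {r..e}" "forwarded s" and t: "t \<le> s + d s"
  shows "(\<Sum>u\<in>{s..<t}. card (arrivals u)) \<le> 2 * (delay_cap - 1)"
proof -
  have "(\<Sum>u\<in>{s..<t}. card (arrivals u)) = card (\<Union>u\<in>{s..<t}. arrivals u)"
    by (rule card_UN_disjoint[symmetric]) (auto simp: finite_arrivals arrivals_disjoint)
  also have "... \<le> card {s..<s + 2 * (delay_cap - 1)}"
  proof (rule card_inj_on_le[of "\<lambda>x. x + (delay_cap - 1)"])
    show "inj_on (\<lambda>x. x + (delay_cap - 1)) (\<Union>u\<in>{s..<t}. arrivals u)" by (auto simp: inj_on_def)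
    have dsc: "d s < delay_cap" using s forwarded_iff by simp
    show "(\<lambda>x. x + (delay_cap - 1)) ` (\<Union>u\<in>{s..<t}. arrivals u) \<subseteq> {s..<s + 2 * (delay_cap - 1)}"
    proof
      fix y assume "y \<in> (\<lambda>x. x + (delay_cap - 1)) ` (\<Union>u\<in>{s..<t}. arrivals u)"
      then obtain x u where xu: "u \<in> {s..<t}" "x \<in> arrivals u" "y = x + (delay_cap - 1)" by auto
      have "d x < delay_cap" using xu forwarded_iff unfolding arrivals_def by auto
      moreover have "x + d x = u" "x \<le> u" using xu unfolding arrivals_def by auto
      ultimately show "y \<in> {s..<s + 2 * (delay_cap - 1)}" using xu t dsc by auto
    qed
  qed simp
  finally show ?thesis by simp
qed

lemma eta_window_le: "2 * eta K m * real (2 * (delay_cap - 1)) \<le> 1/2"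
proof -
  have c1: "real (delay_cap - 1) \<le> beta K m"
  proof (cases "delay_cap \<ge> 1")
    case True thus ?thesis using delay_cap_less by (simp add: of_nat_diff)
  next
    case False thus ?thesis using beta_pos by simp
  qed
  have "2 * eta K m * real (2 * (delay_cap - 1)) = real (delay_cap - 1) / (exp 1 * beta K m)"
    unfolding eta_def using beta_pos by (simp add: field_simps)
  also have "... \<le> beta K m / (exp 1 * beta K m)"
    using c1 beta_pos by (intro divide_right_mono) auto
  also have "... = 1 / exp 1" using beta_pos by simp
  also have "... \<le> 1/2" using exp_1_ge_2 by (simp add: field_simps)
  finally show ?thesis .
qed

lemma batch_mean_le_card:
  assumes hs: "hs \<in> histories K T" and u: "r \<le> u" "u \<le> e"
    and stable: "\<And>s b. s \<in> arrivals u \<Longrightarrow> b \<in> {1..K} \<Longrightarrow> prob hs u b \<le> 2 * prob hs s b"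
  shows "batch_mean hs u \<le> 2 * real (card (arrivals u))"
proof -
  have "batch_mean hs u = (\<Sum>s\<in>arrivals u. prob hs u (hs ! (s - 1)) * l s (hs ! (s - 1)) / prob hs s (hs ! (s - 1)))"
    by (rule batch_mean_eq[OF hs u(2)])
  also have "... \<le> (\<Sum>s\<in>arrivals u. 2)"
  proof (rule sum_mono)
    fix s assume s: "s \<in> arrivals u"
    hence s_epoch: "s \<in> {r..e}" using arrivals_subset[OF u(2)] by auto
    hence a: "hs ! (s - 1) \<in> {1..K}" using hs start_ge_1 end_le_T by (intro nth_history) auto
    have p: "prob hs s (hs ! (s - 1)) > 0" using round_prob_pos[OF K_ge_1] s_epoch start_ge_1 by auto
    have "0 \<le> l s (hs ! (s - 1))" "l s (hs ! (s - 1)) \<le> 1"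
      using loss_bounded[OF epoch_round_le_horizon[OF s_epoch] a] by auto
    hence "prob hs u (hs ! (s - 1)) * l s (hs ! (s - 1)) \<le> 2 * prob hs s (hs ! (s - 1)) * 1"
      using stable[OF s a] p round_prob_pos[OF K_ge_1, where t=u and hs=hs] u start_ge_1 by (intro mult_mono) (auto intro: less_imp_le)
    thus "prob hs u (hs ! (s - 1)) * l s (hs ! (s - 1)) / prob hs s (hs ! (s - 1)) \<le> 2"
      using p by (simp add: divide_le_eq)
  qed
  finally show ?thesis by simp
qed

lemma total_weight_window:
  assumes hs: "hs \<in> histories K T" and s: "r \<le> s" and v: "s \<le> v" "v \<le> Suc e"
    and mean: "\<And>u. u \<in> {s..<v} \<Longrightarrow> batch_mean hs u \<le> 2 * real (card (arrivals u))"
    and small: "2 * eta K m * real (\<Sum>u\<in>{s..<v}. card (arrivals u)) \<le> 1"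
  shows "(1 - 2 * eta K m * real (\<Sum>u\<in>{s..<v}. card (arrivals u))) * total_weight hs s \<le> total_weight hs v"
  using v mean small
proof (induction v rule: dec_induct)
  case base thus ?case by simp
next
  case (step v)
  let ?a = "2 * eta K m * real (\<Sum>u\<in>{s..<v}. card (arrivals u))"
  let ?c = "2 * eta K m * real (card (arrivals v))"
  have split: "(\<Sum>u\<in>{s..<Suc v}. card (arrivals u)) = (\<Sum>u\<in>{s..<v}. card (arrivals u)) + card (arrivals v)"
    using step by simp
  have nonneg: "?a \<ge> 0" "?c \<ge> 0" using eta_pos by (auto intro!: mult_nonneg_nonneg sum_nonneg)
  have ac: "?a + ?c \<le> 1" using step.prems(3) unfolding split of_nat_add distrib_left .
  have "(1 - (?a + ?c)) * total_weight hs s \<le> (1 - ?a) * total_weight hs s * (1 - ?c)"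
  proof -
    have "1 - (?a + ?c) \<le> (1 - ?a) * (1 - ?c)" using mult_nonneg_nonneg[OF nonneg] by (simp add: algebra_simps)
    thus ?thesis using total_weight_pos[of hs s] by (simp add: mult.commute mult.left_commute mult_right_mono)
  qed
  also have "... \<le> total_weight hs v * (1 - ?c)"
    using step ac nonneg by (intro mult_right_mono) (auto simp: split)
  also have "... \<le> total_weight hs v * (1 - eta K m * batch_mean hs v)"
    using step.prems(2)[of v] step.hyps total_weight_pos[of hs v] eta_pos by (intro mult_left_mono) auto
  also have "... \<le> total_weight hs (Suc v)" using step s by (intro total_weight_Suc_ge[OF hs]) auto
  finally show ?case using split by (simp add: distrib_left)
qed

text \<open>The stability of DEW: while the feedback of a forwarded round \<open>s\<close> is outstanding, at most
  \<open>2 (\<beta> - 1)\<close> feedbacks arrive, which is too few for the weights to lose half their mass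
  because \<open>\<eta> = 1 / (4 e \<beta>)\<close>.\<close>
lemma round_prob_ratio:
  assumes hs: "hs \<in> histories K T"
  shows "t \<in> {r..e} \<Longrightarrow> s \<in> {r..t} \<Longrightarrow> forwarded s
      \<Longrightarrow> t \<le> s + d s \<Longrightarrow> b \<in> {1..K}
     \<Longrightarrow> prob hs t b \<le> 2 * prob hs s b"
proof (induction t arbitrary: s b rule: less_induct)
  case (less t)
  show ?case
  proof (cases "s = t")
    case True thus ?thesis using round_prob_pos[OF K_ge_1, where t=t and hs=hs and a=b] less.prems start_ge_1 by simp
  next
    case False
    have s: "s \<in> {r..e}" "s \<le> t" using less.prems by auto
    have "real (\<Sum>u\<in>{s..<t}. card (arrivals u)) \<le> real (2 * (delay_cap - 1))"
      using card_arrivals_window[OF s(1) less.prems(3,4)] by (simp only: of_nat_le_iff)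
    hence "2 * eta K m * real (\<Sum>u\<in>{s..<t}. card (arrivals u)) \<le> 2 * eta K m * real (2 * (delay_cap - 1))"
      using eta_pos by (intro mult_left_mono) auto
    hence window: "2 * eta K m * real (\<Sum>u\<in>{s..<t}. card (arrivals u)) \<le> 1/2"
      using eta_window_le by linarith
    have mean: "batch_mean hs u \<le> 2 * real (card (arrivals u))" if u: "u \<in> {s..<t}" for u
      using u less.prems
      by (intro batch_mean_le_card[OF hs] less.IH) (auto simp: arrivals_def)
    have "(1/2) * total_weight hs s \<le> (1 - 2 * eta K m * real (\<Sum>u\<in>{s..<t}. card (arrivals u))) * total_weight hs s"
      using window total_weight_pos[of hs s] by (intro mult_right_mono) auto
    also have "... \<le> total_weight hs t"
      using s window less.prems by (intro total_weight_window[OF hs _ _ _ mean]) auto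
    finally have half: "total_weight hs s / 2 \<le> total_weight hs t" by simp
    have "prob hs t b = weight hs t b / total_weight hs t" using less.prems by (simp add: round_prob_eq_weight)
    also have "... \<le> weight hs s b / (total_weight hs s / 2)"
      using half less.prems s weight_pos[of hs s b] total_weight_pos[of hs s]
      by (intro frac_le weight_antimono[OF hs]) auto
    also have "... = 2 * prob hs s b" using s by (simp add: round_prob_eq_weight)
    finally show ?thesis .
  qed
qed

lemma round_prob_Suc_ge:
  assumes hs: "hs \<in> histories K T" and v: "v \<in> {r..e}" "Suc v \<le> e"
  shows "prob hs v b * (1 - eta K m * batch_est hs v b) \<le> prob hs (Suc v) b"
proof -
  have "prob hs v b * (1 - eta K m * batch_est hs v b)
      = weight hs v b * (1 - eta K m * batch_est hs v b) / total_weight hs v"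
    using round_prob_eq_weight[OF v(1)] by simp
  also have "... \<le> weight hs v b * exp (- eta K m * batch_est hs v b) / total_weight hs v"
    using weight_pos[of hs v b] total_weight_pos[of hs v] exp_ge_add_one_self[of "- eta K m * batch_est hs v b"]
    by (intro divide_right_mono mult_left_mono) auto
  also have "... \<le> weight hs v b * exp (- eta K m * batch_est hs v b) / total_weight hs (Suc v)"
    using total_weight_antimono_Suc[OF hs] v total_weight_pos[of hs "Suc v"] total_weight_pos[of hs v] weight_pos[of hs v b]
    by (intro divide_left_mono) auto
  also have "... = prob hs (Suc v) b"
    using round_prob_eq_weight[of "Suc v"] v by (simp add: weight_Suc)
  finally show ?thesis .
qed

lemma mixed_loss_drift_Suc:
  assumes hs: "hs \<in> histories K T" and v: "v \<in> {r..e}" "Suc v \<le> e" and s': "s' \<in> {1..T}"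
  shows "(\<Sum>b\<in>{1..K}. prob hs v b * l s' b) - (\<Sum>b\<in>{1..K}. prob hs (Suc v) b * l s' b)
    \<le> eta K m * batch_mean hs v"
proof -
  have each: "(prob hs v b - prob hs (Suc v) b) * l s' b
      \<le> eta K m * (prob hs v b * batch_est hs v b)" if b: "b \<in> {1..K}" for b
  proof -
    have drop: "prob hs v b - prob hs (Suc v) b \<le> eta K m * (prob hs v b * batch_est hs v b)"
      using round_prob_Suc_ge[OF hs v, of b] by (simp add: algebra_simps)
    have "0 \<le> eta K m * (prob hs v b * batch_est hs v b)"
      using eta_pos round_prob_pos[OF K_ge_1, where hs=hs and t=v and a=b and l=l and d=d] batch_est_nonneg[OF hs, of v b] v start_ge_1
      by (auto intro!: mult_nonneg_nonneg)
    moreover have "0 \<le> l s' b" "l s' b \<le> 1" using loss_bounded[OF s' b] by auto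
    ultimately show ?thesis using drop
      by (cases "prob hs v b - prob hs (Suc v) b \<ge> 0")
        (auto intro: order_trans[OF mult_left_le] order_trans[OF mult_nonpos_nonneg])
  qed
  have "(\<Sum>b\<in>{1..K}. prob hs v b * l s' b) - (\<Sum>b\<in>{1..K}. prob hs (Suc v) b * l s' b)
      = (\<Sum>b\<in>{1..K}. (prob hs v b - prob hs (Suc v) b) * l s' b)"
    by (simp add: sum_subtractf left_diff_distrib)
  also have "... \<le> (\<Sum>b\<in>{1..K}. eta K m * (prob hs v b * batch_est hs v b))"
    by (intro sum_mono each)
  also have "... = eta K m * batch_mean hs v" unfolding batch_mean_def by (simp add: sum_distrib_left)
  finally show ?thesis .
qed

lemma mixed_loss_drift: assumes hs: "hs \<in> histories K T" and s: "s \<in> {r..e}" and u: "s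
    \<le> u" "u \<le> e" and s': "s' \<in> {1..T}"
  shows "(\<Sum>b\<in>{1..K}. prob hs s b * l s' b) - (\<Sum>b\<in>{1..K}. prob hs u b * l s' b)
     \<le> eta K m * (\<Sum>v\<in>{s..<u}. batch_mean hs v)"
  using u
proof (induction u rule: dec_induct)
  case base thus ?case by simp
next
  case (step u)
  have "(\<Sum>b\<in>{1..K}. prob hs u b * l s' b) - (\<Sum>b\<in>{1..K}. prob hs (Suc u) b * l s' b) \<le> eta K m * batch_mean hs u"
    using step s by (intro mixed_loss_drift_Suc[OF hs _ _ s']) auto
  thus ?case using step by (simp add: distrib_left)
qed

end
section \<open>A single epoch: expectations\<close>

context dew_epoch begin

abbreviation \<E> :: "(nat list \<Rightarrow> real) \<Rightarrow> real" where "\<E> f \<equiv> expect K l d T f"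

definition mixed_loss :: "nat list \<Rightarrow> nat \<Rightarrow> nat \<Rightarrow> real" where
  "mixed_loss hs u s = (\<Sum>b\<in>{1..K}. prob hs u b * l s b)"

lemma mixed_loss_le_1: assumes s: "s \<in> {1..T}" and u: "1 \<le> u" shows "mixed_loss hs u s \<le> 1"
proof -
  have "mixed_loss hs u s \<le> (\<Sum>b\<in>{1..K}. prob hs u b * 1)" unfolding mixed_loss_def
    using loss_bounded[OF s] round_prob_pos[OF K_ge_1 u, where hs=hs and l=l and d=d]
    by (intro sum_mono mult_left_mono) (auto intro: less_imp_le)
  also have "... = 1" using round_prob_sum[OF K_ge_1 u] by simp
  finally show ?thesis .
qed

lemma expect_mixed_loss_le_1: assumes s: "s \<in> {1..T}" and u: "1 \<le> u" shows "\<E> (\<lambda>hs. mixed_loss hs u s) \<le> 1"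
  using expect_mono[OF K_ge_1, of T "\<lambda>hs. mixed_loss hs u s" "\<lambda>hs. 1"] mixed_loss_le_1[OF s u]
  by (simp add: expect_const[OF K_ge_1])

lemma loss_est_take: "s \<le> n \<Longrightarrow> 1 \<le> s \<Longrightarrow> loss_est (take n hs) s b = loss_est hs s b"
  unfolding loss_est_def by (simp add: round_prob_take)

lemma loss_est_update_other: assumes "1 \<le> s" "1 \<le> s'" "s' \<noteq> s" "s' \<le> s + d s"
    shows "loss_est (hs[s - 1 := c]) s' b = loss_est hs s' b"
proof -
  have "s' - 1 \<noteq> s - 1" using assms by arith
  hence "hs[s - 1 := c] ! (s' - 1) = hs ! (s' - 1)" by simp
  moreover have "prob (hs[s - 1 := c]) s' = prob hs s'" using assms by (intro round_prob_update) auto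
  ultimately show ?thesis unfolding loss_est_def by simp
qed

lemma expect_loss_eq_mixed_loss: assumes s: "s \<in> {1..T}"
  shows "\<E> (\<lambda>hs. l s (hs ! (s - 1))) = \<E> (\<lambda>hs. mixed_loss hs s s)"
proof -
  have "\<E> (\<lambda>hs. l s (hs ! (s - 1))) = \<E> (\<lambda>hs. \<Sum>a\<in>{1..K}. if hs ! (s - 1)
      = a then (prob hs s a * l s a) / prob hs s a else 0)"
  proof (rule expect_cong)
    fix hs assume hs: "hs \<in> histories K T"
    have A: "hs ! (s - 1) \<in> {1..K}" using nth_history[OF hs s] .
    have p: "prob hs s (hs ! (s - 1)) > 0" using round_prob_pos[OF K_ge_1] s by auto
    show "l s (hs ! (s - 1)) = (\<Sum>a\<in>{1..K}. if hs ! (s - 1) = a then (prob hs s a * l s a) / prob hs s a else 0)"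
      using A p by (simp add: sum.delta)
  qed
  also have "... = (\<Sum>a\<in>{1..K}. \<E> (\<lambda>hs. if hs ! (s - 1) = a then (prob hs s a * l s a) / prob hs s a else 0))"
    by (rule expect_sum)
  also have "... = (\<Sum>a\<in>{1..K}. \<E> (\<lambda>hs. prob hs s a * l s a))"
  proof (rule sum.cong[OF refl])
    fix a assume a: "a \<in> {1..K}"
    show "\<E> (\<lambda>hs. if hs ! (s - 1) = a then (prob hs s a * l s a) / prob hs s a else 0) = \<E> (\<lambda>hs. prob hs s a * l s a)"
      using s by (intro expect_importance_weight_take[OF K_ge_1 _ order_refl _ _ a, where G="\<lambda>hs. prob hs s a * l s a"])
                 (auto simp: round_prob_update round_prob_update' round_prob_take)
  qed
  also have "... = \<E> (\<lambda>hs. mixed_loss hs s s)" unfolding mixed_loss_def by (rule expect_sum[symmetric])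
  finally show ?thesis .
qed

lemma expect_loss_est: assumes s: "s \<in> {1..T}" and a: "a \<in> {1..K}" shows "\<E> (\<lambda>hs. loss_est hs s a) = l s a"
proof -
  have "\<E> (\<lambda>hs. loss_est hs s a) = \<E> (\<lambda>hs. l s a)"
    using s by (intro expect_importance_weight_take[OF K_ge_1 _ order_refl _ _ a, where G="\<lambda>hs. l s a"]) (auto simp: loss_est_def)
  thus ?thesis using expect_const[OF K_ge_1] by simp
qed

lemma expect_arrival_est: assumes s: "s \<in> {r..e}" "forwarded s" and u: "u = s + d s" "u \<le> e"
  shows "\<E> (\<lambda>hs. \<Sum>b\<in>{1..K}. prob hs u b * loss_est hs s b) = \<E> (\<lambda>hs. mixed_loss hs u s)"
proof -
  have s1: "1 \<le> s" using s start_ge_1 by auto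
  have "\<E> (\<lambda>hs. \<Sum>b\<in>{1..K}. prob hs u b * loss_est hs s b)
      = (\<Sum>b\<in>{1..K}. \<E> (\<lambda>hs. prob hs u b * loss_est hs s b))"
    by (rule expect_sum)
  also have "... = (\<Sum>b\<in>{1..K}. \<E> (\<lambda>hs. prob hs u b * l s b))"
  proof (rule sum.cong[OF refl])
    fix b assume b: "b \<in> {1..K}"
    show "\<E> (\<lambda>hs. prob hs u b * loss_est hs s b) = \<E> (\<lambda>hs. prob hs u b * l s b)"
      using s1 u end_le_T by (intro expect_importance_weight_take[OF K_ge_1 s1 _ _ _ b, where n=u and G="\<lambda>hs. prob hs u b * l s b"])
                 (auto simp: round_prob_update round_prob_update' round_prob_take loss_est_def)
  qed
  also have "... = \<E> (\<lambda>hs. mixed_loss hs u s)" unfolding mixed_loss_def by (rule expect_sum[symmetric])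
  finally show ?thesis .
qed

lemma expect_loss_est_square: assumes s: "s \<in> arrivals u" and u: "u \<le> e" and b: "b \<in> {1..K}"
  shows "\<E> (\<lambda>hs. prob hs u b * (loss_est hs s b)^2) \<le> 2"
proof -
  have sa: "s \<in> {r..u}" "s + d s = u" "forwarded s" using arrivalsD[OF s] by auto
  have s1: "1 \<le> s" using sa start_ge_1 by auto
  have "\<E> (\<lambda>hs. prob hs u b * (loss_est hs s b)^2) = \<E> (\<lambda>hs. prob hs u b * (l s b)^2 / prob hs s b)"
  proof (intro expect_importance_weight_take[OF K_ge_1 s1 _ _ _ b, where n=u and G="\<lambda>hs. prob hs u b * (l s b)^2 / prob hs s b"])
    fix hs assume "hs \<in> histories K T"
    show "prob hs u b * (loss_est hs s b)\<^sup>2 = (if hs ! (s - 1) = b then prob hs u b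
        * (l s b)\<^sup>2 / prob hs s b / prob hs s b else 0)"
      unfolding loss_est_def by (auto simp: power2_eq_square)
  qed (use sa u end_le_T s1 in \<open>auto simp: round_prob_update round_prob_update' round_prob_take\<close>)
  also have "... \<le> \<E> (\<lambda>hs. 2)"
  proof (rule expect_mono[OF K_ge_1])
    fix hs assume hs: "hs \<in> histories K T"
    have sre: "s \<in> {r..e}" using sa u by auto
    have p: "prob hs s b > 0" using round_prob_pos[OF K_ge_1] s1 by auto
    have rat: "prob hs u b \<le> 2 * prob hs s b"
      using sa u start_le_end b by (intro round_prob_ratio[OF hs]) auto
    have L: "0 \<le> l s b" "l s b \<le> 1" using loss_bounded[OF epoch_round_le_horizon[OF sre] b] by auto
    have L2: "(l s b)^2 \<le> 1" using L by (simp add: power_le_one)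
    have "prob hs u b * (l s b)^2 \<le> 2 * prob hs s b * 1"
      using rat L2 p by (intro mult_mono) auto
    thus "prob hs u b * (l s b)^2 / prob hs s b \<le> 2" using p by (simp add: divide_le_eq)
  qed
  also have "... = 2" by (rule expect_const[OF K_ge_1])
  finally show ?thesis .
qed

text \<open>The later round \<open>s'\<close> is integrated out first: the estimate for the earlier round \<open>s\<close>
  does not depend on the action of round \<open>s'\<close>.\<close>
lemma expect_loss_est_cross_less: assumes s: "s \<in> arrivals u" and s': "s' \<in> arrivals u"
    and lt: "s < s'" and u: "u \<le> e" and b: "b \<in> {1..K}"
  shows "\<E> (\<lambda>hs. prob hs u b * loss_est hs s b * loss_est hs s' b) = \<E> (\<lambda>hs. prob hs u b * l s b * l s' b)"
proof -
  have sa: "s \<in> {r..u}" "s + d s = u" "forwarded s" using arrivalsD[OF s] by auto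
  have sa': "s' \<in> {r..u}" "s' + d s' = u" "forwarded s'" using arrivalsD[OF s'] by auto
  have s1: "1 \<le> s" "1 \<le> s'" using sa sa' start_ge_1 by auto
  have "\<E> (\<lambda>hs. prob hs u b * loss_est hs s b * loss_est hs s' b) = \<E> (\<lambda>hs. prob hs u b * loss_est hs s b * l s' b)"
  proof (intro expect_importance_weight_take[OF K_ge_1 s1(2) _ _ _ b, where n=u
      and G="\<lambda>hs. prob hs u b * loss_est hs s b * l s' b"])
    fix hs assume "hs \<in> histories K T"
    show "prob hs u b * loss_est hs s b * loss_est hs s' b = (if hs ! (s' - 1) = b then prob hs u b
        * loss_est hs s b * l s' b / prob hs s' b else 0)"
      unfolding loss_est_def[of hs s' b] by auto
  next
    fix hs c assume "hs \<in> histories K u" "c \<in> {1..K}"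
    have "loss_est (hs[s' - 1 := c]) s b = loss_est hs s b" using s1 lt by (intro loss_est_update_other) auto
    moreover have "prob (hs[s' - 1 := c]) u = prob hs u" using s1 sa' by (intro round_prob_update) auto
    ultimately show "prob (hs[s' - 1 := c]) u b * loss_est (hs[s' - 1 := c]) s b * l s' b = prob hs u b * loss_est hs s b * l s' b"
      by simp
  next
    fix hs assume "hs \<in> histories K T"
    show "prob hs u b * loss_est hs s b * l s' b = prob (take u hs) u b * loss_est (take u hs) s b * l s' b"
      using sa s1 by (simp add: round_prob_take loss_est_take)
  qed (use sa' u end_le_T in auto)
  also have "... = \<E> (\<lambda>hs. prob hs u b * l s b * l s' b)"
  proof (intro expect_importance_weight_take[OF K_ge_1 s1(1) _ _ _ b, where n=u and G="\<lambda>hs. prob hs u b * l s b * l s' b"])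
    fix hs assume "hs \<in> histories K T"
    show "prob hs u b * loss_est hs s b * l s' b = (if hs ! (s - 1) = b then prob hs u b * l s b * l s' b / prob hs s b else 0)"
      unfolding loss_est_def[of hs s b] by auto
  qed (use sa u end_le_T s1 in \<open>auto simp: round_prob_update round_prob_update' round_prob_take\<close>)
  finally show ?thesis .
qed

lemma expect_loss_est_cross: assumes s: "s \<in> arrivals u" and s': "s' \<in> arrivals u" and ne: "s \<noteq> s'" and u: "u \<le> e"
  shows "\<E> (\<lambda>hs. \<Sum>b\<in>{1..K}. prob hs u b * loss_est hs s b * loss_est hs s' b) \<le> 1"
proof -
  have sre: "s \<in> {r..e}" "s' \<in> {r..e}" using arrivalsD[OF s] arrivalsD[OF s'] u by auto
  have eq: "\<E> (\<lambda>hs. prob hs u b * loss_est hs s b * loss_est hs s' b) = \<E> (\<lambda>hs. prob hs u b * l s b * l s' b)"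
    if b: "b \<in> {1..K}" for b
  proof (cases "s < s'")
    case True thus ?thesis using expect_loss_est_cross_less[OF s s' True u b] by simp
  next
    case False
    hence "s' < s" using ne by simp
    from expect_loss_est_cross_less[OF s' s this u b] show ?thesis by (simp add: mult_ac)
  qed
  have "\<E> (\<lambda>hs. \<Sum>b\<in>{1..K}. prob hs u b * loss_est hs s b * loss_est hs s' b)
      = (\<Sum>b\<in>{1..K}. \<E> (\<lambda>hs. prob hs u b * loss_est hs s b * loss_est hs s' b))"
    by (rule expect_sum)
  also have "... = (\<Sum>b\<in>{1..K}. \<E> (\<lambda>hs. prob hs u b * l s b * l s' b))" using eq by simp
  also have "... \<le> (\<Sum>b\<in>{1..K}. \<E> (\<lambda>hs. prob hs u b))"
  proof (intro sum_mono expect_mono[OF K_ge_1])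
    fix b hs assume b: "b \<in> {1..K}" and hs: "hs \<in> histories K T"
    have L: "0 \<le> l s b" "l s b \<le> 1" "0 \<le> l s' b" "l s' b \<le> 1"
      using loss_bounded[OF epoch_round_le_horizon[OF sre(1)] b]
        loss_bounded[OF epoch_round_le_horizon[OF sre(2)] b] by auto
    have p: "prob hs u b \<ge> 0"
      using round_prob_pos[OF K_ge_1, where hs=hs and t=u and a=b and l=l and d=d]
        sre arrivalsD[OF s] start_ge_1 by auto
    have "l s b * l s' b \<le> 1 * 1" using L by (intro mult_mono) auto
    hence "prob hs u b * (l s b * l s' b) \<le> prob hs u b * 1" using p by (intro mult_left_mono) auto
    thus "prob hs u b * l s b * l s' b \<le> prob hs u b" by (simp add: mult.assoc)
  qed
  also have "... = \<E> (\<lambda>hs. \<Sum>b\<in>{1..K}. prob hs u b)" by (rule expect_sum[symmetric])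
  also have "... = \<E> (\<lambda>hs. 1)"
  proof (rule expect_cong)
    fix hs
    have "1 \<le> u" using arrivalsD[OF s] start_ge_1 by auto
    thus "(\<Sum>b\<in>{1..K}. prob hs u b) = 1" by (rule round_prob_sum[OF K_ge_1])
  qed
  also have "... = 1" by (rule expect_const[OF K_ge_1])
  finally show ?thesis .
qed

lemma batch_second_moment_expand: "batch_second_moment hs u
    = (\<Sum>s\<in>arrivals u. \<Sum>s'\<in>arrivals u. \<Sum>b\<in>{1..K}. prob hs u b * loss_est hs s b
    * loss_est hs s' b)"
proof -
  have "batch_second_moment hs u = (\<Sum>b\<in>{1..K}. \<Sum>s\<in>arrivals u. \<Sum>s'\<in>arrivals u. prob
      hs u b * loss_est hs s b * loss_est hs s' b)"
    unfolding batch_second_moment_def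
  proof (intro sum.cong refl)
    fix b
    show "prob hs u b * (batch_est hs u b)^2
        = (\<Sum>s\<in>arrivals u. \<Sum>s'\<in>arrivals u. prob hs u b * loss_est hs s b * loss_est hs s' b)"
    proof -
      have "batch_est hs u b * batch_est hs u b = (\<Sum>s\<in>arrivals u. \<Sum>s'\<in>arrivals u. loss_est hs s b * loss_est hs s' b)"
        unfolding batch_est_def by (rule sum_product)
      thus ?thesis by (simp add: power2_eq_square sum_distrib_left mult.assoc)
    qed
  qed
  also have "... = (\<Sum>s\<in>arrivals u. \<Sum>b\<in>{1..K}. \<Sum>s'\<in>arrivals u. prob hs u b * loss_est hs s b * loss_est hs s' b)"
    by (rule sum.swap)
  also have "... = (\<Sum>s\<in>arrivals u. \<Sum>s'\<in>arrivals u. \<Sum>b\<in>{1..K}. prob hs u b * loss_est hs s b * loss_est hs s' b)"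
    by (intro sum.cong refl sum.swap)
  finally show ?thesis .
qed

lemma expect_batch_second_moment: assumes u: "u \<le> e"
  shows "\<E> (\<lambda>hs. batch_second_moment hs u) \<le> (\<Sum>s\<in>arrivals u. 2 * real K + real (card (arrivals u - {s})))"
proof -
  have "\<E> (\<lambda>hs. batch_second_moment hs u)
      = (\<Sum>s\<in>arrivals u. \<Sum>s'\<in>arrivals u. \<E> (\<lambda>hs. \<Sum>b\<in>{1..K}. prob hs u b
      * loss_est hs s b * loss_est hs s' b))"
    unfolding batch_second_moment_expand by (simp add: expect_sum)
  also have "... \<le> (\<Sum>s\<in>arrivals u. 2 * real K + real (card (arrivals u - {s})))"
  proof (rule sum_mono)
    fix s assume s: "s \<in> arrivals u"
    let ?g = "\<lambda>s'. \<E> (\<lambda>hs. \<Sum>b\<in>{1..K}. prob hs u b * loss_est hs s b * loss_est hs s' b)"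
    have A: "(\<Sum>s'\<in>arrivals u. ?g s') = ?g s + (\<Sum>s'\<in>arrivals u - {s}. ?g s')"
      by (rule sum.remove[OF finite_arrivals s])
    have B1: "?g s = (\<Sum>b\<in>{1..K}. \<E> (\<lambda>hs. prob hs u b * (loss_est hs s b)^2))"
      by (simp add: expect_sum power2_eq_square mult.assoc)
    have B2: "(\<Sum>b\<in>{1..K}. \<E> (\<lambda>hs. prob hs u b * (loss_est hs s b)^2)) \<le> (\<Sum>b\<in>{1..K}. 2)"
      by (rule sum_mono) (rule expect_loss_est_square[OF s u], assumption)
    have B3: "(\<Sum>b\<in>{1..K}. (2::real)) = 2 * real K" by simp
    have C1: "(\<Sum>s'\<in>arrivals u - {s}. ?g s') \<le> (\<Sum>s'\<in>arrivals u - {s}. 1)"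
      by (rule sum_mono) (rule expect_loss_est_cross[OF s _ _ u], auto)
    have C2: "(\<Sum>s'\<in>arrivals u - {s}. (1::real)) = real (card (arrivals u - {s}))" by simp
    show "(\<Sum>s'\<in>arrivals u. ?g s') \<le> 2 * real K + real (card (arrivals u - {s}))"
      using A B1 B2 B3 C1 C2 by linarith
  qed
  finally show ?thesis .
qed

lemma expect_batch_mean: assumes u: "u \<le> e"
  shows "\<E> (\<lambda>hs. batch_mean hs u) \<le> real (card (arrivals u))"
proof -
  have "\<E> (\<lambda>hs. batch_mean hs u) = \<E> (\<lambda>hs. \<Sum>s\<in>arrivals u. \<Sum>b\<in>{1..K}. prob hs u b * loss_est hs s b)"
    unfolding batch_mean_def batch_est_def by (intro expect_cong) (simp add: sum_distrib_left, rule sum.swap)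
  also have "... = (\<Sum>s\<in>arrivals u. \<E> (\<lambda>hs. \<Sum>b\<in>{1..K}. prob hs u b * loss_est hs s b))" by (rule expect_sum)
  also have "... = (\<Sum>s\<in>arrivals u. \<E> (\<lambda>hs. mixed_loss hs u s))"
  proof (intro sum.cong refl expect_arrival_est)
    fix s assume "s \<in> arrivals u" thus "s \<in> {r..e}" "forwarded s" "u = s + d s" using arrivalsD[of s u] u by auto
  qed (rule u)
  also have "... \<le> (\<Sum>s\<in>arrivals u. 1)"
  proof (intro sum_mono expect_mixed_loss_le_1)
    fix s assume s: "s \<in> arrivals u"
    thus "s \<in> {1..T}" using arrivals_subset[OF u] start_ge_1 end_le_T by auto
    show "1 \<le> u" using arrivalsD[OF s] start_ge_1 by auto
  qed
  finally show ?thesis by simp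
qed

end
section \<open>A single epoch: counting delays\<close>

context dew_epoch begin

definition forwarded_rounds :: "nat set" where "forwarded_rounds = {s \<in> {r..e}. forwarded s}"
definition arrived_rounds :: "nat set" where "arrived_rounds = received (Suc e)"
definition forwarded_delay :: nat where "forwarded_delay = (\<Sum>s\<in>forwarded_rounds. d s)"

lemma finite_forwarded_rounds: "finite forwarded_rounds" unfolding forwarded_rounds_def by simp
lemma finite_arrived_rounds: "finite arrived_rounds" unfolding arrived_rounds_def by (rule finite_received)
lemma arrived_rounds_eq: "arrived_rounds = {s \<in> {r..e}. forwarded s \<and> s + d s \<le> e}"
    unfolding arrived_rounds_def received_def by auto
lemma arrived_roundsD: "s \<in> arrived_rounds \<Longrightarrow> s \<in> {r..e} \<and> forwarded s \<and> s + d s \<le> e"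
  unfolding arrived_rounds_eq by auto

lemma arrived_subset_forwarded: "arrived_rounds \<subseteq> forwarded_rounds" unfolding arrived_rounds_eq forwarded_rounds_def by auto
lemma arrivals_subset_forwarded: "u \<le> e
    \<Longrightarrow> arrivals u \<subseteq> forwarded_rounds" unfolding arrivals_def forwarded_rounds_def by auto

lemma sum_arrivals_regroup: "(\<Sum>u\<in>{r..e}. \<Sum>s\<in>arrivals u. f s u) = (\<Sum>s\<in>arrived_rounds. f s (s + d s))"
proof -
  have "(\<Sum>s\<in>arrived_rounds. f s (s + d s)) = (\<Sum>u\<in>{r..e}. \<Sum>s\<in>{x\<in>arrived_rounds. x + d x = u}. f s (s + d s))"
    by (rule sum.group[symmetric]) (auto simp: finite_arrived_rounds arrived_rounds_eq)
  also have "... = (\<Sum>u\<in>{r..e}. \<Sum>s\<in>arrivals u. f s u)"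
  proof (rule sum.cong[OF refl])
    fix u assume u: "u \<in> {r..e}"
    have "{x\<in>arrived_rounds. x + d x = u} = arrivals u" using u unfolding arrived_rounds_eq arrivals_def by auto
    thus "(\<Sum>s\<in>{x\<in>arrived_rounds. x + d x = u}. f s (s + d s)) = (\<Sum>s\<in>arrivals u. f s u)"
      by (intro sum.cong) (auto simp: arrivals_def)
  qed
  finally show ?thesis by simp
qed

definition outstanding_before :: "nat \<Rightarrow> nat set" where
  "outstanding_before s = {s'\<in>forwarded_rounds. s' < s \<and> s \<le> s' + d s'}"

lemma sum_card_outstanding_before: "(\<Sum>s\<in>arrived_rounds. card (outstanding_before s)) \<le> forwarded_delay"
proof -
  have "(\<Sum>s\<in>arrived_rounds. card (outstanding_before s))
      = (\<Sum>s\<in>arrived_rounds. \<Sum>s'\<in>forwarded_rounds. if s' < s \<and> s \<le> s' + d s' then 1 else 0)"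
    unfolding outstanding_before_def by (intro sum.cong refl card_filter_eq_sum finite_forwarded_rounds)
  also have "... = (\<Sum>s'\<in>forwarded_rounds. \<Sum>s\<in>arrived_rounds. if s' < s \<and> s \<le> s' + d s' then 1 else 0)"
    by (rule sum.swap)
  also have "... = (\<Sum>s'\<in>forwarded_rounds. card {s\<in>arrived_rounds. s' < s \<and> s \<le> s' + d s'})"
    by (intro sum.cong refl card_filter_eq_sum[symmetric] finite_arrived_rounds)
  also have "... \<le> (\<Sum>s'\<in>forwarded_rounds. card {s'<..s' + d s'})"
    by (intro sum_mono card_mono) auto
  also have "... = forwarded_delay" unfolding forwarded_delay_def by simp
  finally show ?thesis .
qed

lemma sum_arrived_le_twice_delay:
  assumes "\<And>s. s \<in> arrived_rounds \<Longrightarrow> f s \<le> d s + card (outstanding_before s)"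
  shows "(\<Sum>s\<in>arrived_rounds. f s) \<le> 2 * forwarded_delay"
proof -
  have "(\<Sum>s\<in>arrived_rounds. f s) \<le> (\<Sum>s\<in>arrived_rounds. d s)
      + (\<Sum>s\<in>arrived_rounds. card (outstanding_before s))"
    unfolding sum.distrib[symmetric] using assms by (rule sum_mono)
  also have "(\<Sum>s\<in>arrived_rounds. d s) \<le> forwarded_delay"
    unfolding forwarded_delay_def by (intro sum_mono2 finite_forwarded_rounds arrived_subset_forwarded) auto
  finally show ?thesis using sum_card_outstanding_before by simp
qed

lemma sum_card_arrivals_others: "(\<Sum>s\<in>arrived_rounds. card (arrivals (s + d s) - {s})) \<le> 2 * forwarded_delay"
proof (rule sum_arrived_le_twice_delay)
  fix s assume s: "s \<in> arrived_rounds"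
  hence "arrivals (s + d s) \<subseteq> forwarded_rounds" using arrivals_subset_forwarded arrived_roundsD by blast
  hence "arrivals (s + d s) - {s} \<subseteq> {s'\<in>forwarded_rounds. s < s' \<and> s' \<le> s + d s} \<union> outstanding_before s"
    unfolding arrivals_def outstanding_before_def by auto
  hence "card (arrivals (s + d s) - {s}) \<le> card ({s'\<in>forwarded_rounds. s < s' \<and> s' \<le> s
      + d s} \<union> outstanding_before s)"
    by (intro card_mono) (auto simp: finite_forwarded_rounds outstanding_before_def)
  also have "... \<le> card {s'\<in>forwarded_rounds. s < s' \<and> s' \<le> s + d s} + card (outstanding_before s)"
    by (rule card_Un_le)
  also have "card {s'\<in>forwarded_rounds. s < s' \<and> s' \<le> s + d s} \<le> card {s<..s + d s}"
    by (intro card_mono) auto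
  finally show "card (arrivals (s + d s) - {s}) \<le> d s + card (outstanding_before s)" by simp
qed

lemma sum_card_arrivals_window: "(\<Sum>s\<in>arrived_rounds. \<Sum>v\<in>{s..<s + d s}. card (arrivals v)) \<le> 2 * forwarded_delay"
proof (rule sum_arrived_le_twice_delay)
  fix s assume s: "s \<in> arrived_rounds"
  have "(\<Sum>v\<in>{s..<s + d s}. card (arrivals v)) = card (\<Union>v\<in>{s..<s + d s}. arrivals v)"
    by (rule card_UN_disjoint[symmetric]) (auto simp: finite_arrivals arrivals_disjoint)
  also have "... \<le> card ({s'\<in>forwarded_rounds. s \<le> s' \<and> s' < s + d s} \<union> outstanding_before s)"
  proof (intro card_mono)
    show "(\<Union>v\<in>{s..<s + d s}. arrivals v) \<subseteq> {s'\<in>forwarded_rounds. s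
        \<le> s' \<and> s' < s + d s} \<union> outstanding_before s"
    proof
      fix x assume "x \<in> (\<Union>v\<in>{s..<s + d s}. arrivals v)"
      then obtain v where v: "v \<in> {s..<s + d s}" "x \<in> arrivals v" by auto
      have "v \<le> e" using v arrived_roundsD[OF s] by simp
      hence "x \<in> forwarded_rounds" using arrivals_subset_forwarded v(2) by blast
      thus "x \<in> {s'\<in>forwarded_rounds. s \<le> s' \<and> s' < s + d s} \<union> outstanding_before s"
        using v unfolding arrivals_def outstanding_before_def by auto
    qed
  qed (auto simp: finite_forwarded_rounds outstanding_before_def)
  also have "... \<le> card {s'\<in>forwarded_rounds. s \<le> s' \<and> s' < s + d s} + card (outstanding_before s)"
    by (rule card_Un_le)
  also have "card {s'\<in>forwarded_rounds. s \<le> s' \<and> s' < s + d s} \<le> card {s..<s + d s}"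
    by (intro card_mono) auto
  finally show "(\<Sum>v\<in>{s..<s + d s}. card (arrivals v)) \<le> d s + card (outstanding_before s)" by simp
qed

lemma beta_le_sqrt: "beta K m \<le> sqrt (2 ^ m)"
proof -
  have "4 * exp 1 * ln (real K) \<ge> 4 * 2 * (1/2)"
    using exp_1_ge_2 ln_ge_half[of "real K"] K_ge_2 by (intro mult_mono) auto
  hence c: "4 * exp 1 * ln (real K) \<ge> 1" by simp
  show ?thesis unfolding beta_def using c
    by (simp add: divide_le_eq)
qed

lemma card_outstanding_le_beta: "real (card {s \<in> {r..e}. forwarded s \<and> e < s + d s}) \<le> beta K m"
proof (cases "delay_cap = 0")
  case True
  hence "{s \<in> {r..e}. forwarded s \<and> e < s + d s} = {}" using forwarded_iff by auto
  thus ?thesis using beta_pos by (simp only: card.empty of_nat_0 less_imp_le)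
next
  case False
  have "card {s \<in> {r..e}. forwarded s \<and> e < s + d s} \<le> card {..<delay_cap - 1}"
  proof (rule card_inj_on_le[of "\<lambda>s. e - s"])
    show "(\<lambda>s. e - s) ` {s \<in> {r..e}. forwarded s \<and> e < s + d s} \<subseteq> {..<delay_cap - 1}"
      using forwarded_iff by force
  qed (auto simp: inj_on_def)
  hence "real (card {s \<in> {r..e}. forwarded s \<and> e < s + d s}) \<le> real delay_cap - 1"
    using False by (simp add: of_nat_diff)
  thus ?thesis using delay_cap_less by simp
qed

lemma card_not_arrived: "real (card ({r..e} - arrived_rounds)) \<le> 2 * sqrt (2 ^ m)"
proof -
  let ?skipped = "{s \<in> {r..e}. real (d s) \<ge> beta K m}"
  let ?outstanding = "{s \<in> {r..e}. forwarded s \<and> e < s + d s}"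
  have "{r..e} - arrived_rounds \<subseteq> ?skipped \<union> ?outstanding"
    unfolding arrived_rounds_eq forwarded_def by auto
  hence "card ({r..e} - arrived_rounds) \<le> card (?skipped \<union> ?outstanding)" by (intro card_mono) auto
  also have "... \<le> card ?skipped + card ?outstanding" by (rule card_Un_le)
  finally have split: "real (card ({r..e} - arrived_rounds)) \<le> real (card ?skipped) + real (card ?outstanding)"
    by linarith
  have "(real (card ?skipped))^2 \<le> 2 ^ m" using budget_ok unfolding epoch_ok_def by simp
  hence "real (card ?skipped) \<le> sqrt (2 ^ m)" by (rule real_le_rsqrt)
  thus ?thesis using split card_outstanding_le_beta beta_le_sqrt by linarith
qed

lemma expect_mixed_loss_drift:
  assumes s: "s \<in> arrived_rounds"
  shows "\<E> (\<lambda>hs. mixed_loss hs s s)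
    \<le> \<E> (\<lambda>hs. mixed_loss hs (s + d s) s) + eta K m * (\<Sum>v\<in>{s..<s + d s}. real (card (arrivals v)))"
proof -
  have s_epoch: "s \<in> {r..e}" "s + d s \<le> e" and sT: "s \<in> {1..T}"
    using arrived_roundsD[OF s] epoch_round_le_horizon by auto
  have "\<E> (\<lambda>hs. mixed_loss hs s s) - \<E> (\<lambda>hs. mixed_loss hs (s + d s) s)
      = \<E> (\<lambda>hs. mixed_loss hs s s - mixed_loss hs (s + d s) s)"
    by (rule expect_diff[symmetric])
  also have "... \<le> \<E> (\<lambda>hs. eta K m * (\<Sum>v\<in>{s..<s + d s}. batch_mean hs v))"
    unfolding mixed_loss_def using s_epoch sT by (intro expect_mono[OF K_ge_1] mixed_loss_drift) auto
  also have "... = eta K m * (\<Sum>v\<in>{s..<s + d s}. \<E> (\<lambda>hs. batch_mean hs v))" by (simp only: expect_cmult expect_sum)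
  also have "... \<le> eta K m * (\<Sum>v\<in>{s..<s + d s}. real (card (arrivals v)))"
    using eta_pos s_epoch by (intro mult_left_mono sum_mono expect_batch_mean) auto
  finally show ?thesis by simp
qed

lemma sum_expect_mixed_loss_arrival:
  "(\<Sum>s\<in>arrived_rounds. \<E> (\<lambda>hs. mixed_loss hs (s + d s) s)) = \<E> (\<lambda>hs. \<Sum>u\<in>{r..e}. batch_mean hs u)"
proof -
  have "(\<Sum>s\<in>arrived_rounds. \<E> (\<lambda>hs. mixed_loss hs (s + d s) s))
      = (\<Sum>s\<in>arrived_rounds. \<E> (\<lambda>hs. \<Sum>b\<in>{1..K}. prob hs (s + d s) b * loss_est hs s b))"
    using arrived_roundsD by (intro sum.cong refl expect_arrival_est[symmetric]) auto
  also have "... = \<E> (\<lambda>hs. \<Sum>s\<in>arrived_rounds. \<Sum>b\<in>{1..K}. prob hs (s + d s) b * loss_est hs s b)"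
    by (rule expect_sum[symmetric])
  also have "... = \<E> (\<lambda>hs. \<Sum>u\<in>{r..e}. batch_mean hs u)"
  proof (rule expect_cong)
    fix hs
    have "(\<Sum>u\<in>{r..e}. batch_mean hs u)
        = (\<Sum>u\<in>{r..e}. \<Sum>s\<in>arrivals u. \<Sum>b\<in>{1..K}. prob hs u b * loss_est hs s b)"
      unfolding batch_mean_def batch_est_def sum_distrib_left by (intro sum.cong refl sum.swap)
    also have "... = (\<Sum>s\<in>arrived_rounds. \<Sum>b\<in>{1..K}. prob hs (s + d s) b * loss_est hs s b)"
      by (rule sum_arrivals_regroup)
    finally show "(\<Sum>s\<in>arrived_rounds. \<Sum>b\<in>{1..K}. prob hs (s + d s) b * loss_est hs s b)
        = (\<Sum>u\<in>{r..e}. batch_mean hs u)" by simp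
  qed
  finally show ?thesis .
qed

lemma expect_sum_batch_mean_le:
  assumes a: "a \<in> {1..K}"
  shows "\<E> (\<lambda>hs. \<Sum>u\<in>{r..e}. batch_mean hs u) \<le> ln (real K) / eta K m + (\<Sum>s\<in>arrived_rounds. l s a)
    + eta K m / 2 * (\<Sum>u\<in>{r..e}. \<E> (\<lambda>hs. batch_second_moment hs u))"
proof -
  have "\<E> (\<lambda>hs. \<Sum>u\<in>{r..e}. batch_mean hs u) \<le> \<E> (\<lambda>hs. ln (real K) / eta K m
      + (\<Sum>s\<in>arrived_rounds. loss_est hs s a) + eta K m / 2 * (\<Sum>u\<in>{r..e}. batch_second_moment hs u))"
    unfolding arrived_rounds_def by (intro expect_mono[OF K_ge_1] potential_bound a)
  also have "... = ln (real K) / eta K m + (\<Sum>s\<in>arrived_rounds. \<E> (\<lambda>hs. loss_est hs s a))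
      + eta K m / 2 * (\<Sum>u\<in>{r..e}. \<E> (\<lambda>hs. batch_second_moment hs u))"
    by (simp only: expect_add expect_const[OF K_ge_1] expect_sum expect_cmult)
  also have "(\<Sum>s\<in>arrived_rounds. \<E> (\<lambda>hs. loss_est hs s a)) = (\<Sum>s\<in>arrived_rounds. l s a)"
    using arrived_roundsD epoch_round_le_horizon a by (intro sum.cong refl expect_loss_est) auto
  finally show ?thesis .
qed

lemma sum_expect_second_moment_le:
  "(\<Sum>u\<in>{r..e}. \<E> (\<lambda>hs. batch_second_moment hs u)) \<le> 2 * real K
      * real (card arrived_rounds) + 2 * real forwarded_delay"
proof -
  have "(\<Sum>u\<in>{r..e}. \<E> (\<lambda>hs. batch_second_moment hs u))
      \<le> (\<Sum>u\<in>{r..e}. \<Sum>s\<in>arrivals u. 2 * real K + real (card (arrivals u - {s})))"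
    by (intro sum_mono expect_batch_second_moment) auto
  also have "... = (\<Sum>s\<in>arrived_rounds. 2 * real K + real (card (arrivals (s + d s) - {s})))"
    by (rule sum_arrivals_regroup)
  also have "... = 2 * real K * real (card arrived_rounds) + real (\<Sum>s\<in>arrived_rounds. card (arrivals (s + d s) - {s}))"
    by (simp add: sum.distrib)
  also have "real (\<Sum>s\<in>arrived_rounds. card (arrivals (s + d s) - {s})) \<le> real (2 * forwarded_delay)"
    using sum_card_arrivals_others by (simp only: of_nat_le_iff)
  finally show ?thesis by simp
qed

lemma regret_arrived_rounds: assumes a: "a \<in> {1..K}"
  shows "(\<Sum>s\<in>arrived_rounds. \<E> (\<lambda>hs. mixed_loss hs s s) - l s a)
     \<le> ln (real K) / eta K m + eta K m * (real K * real (card arrived_rounds) + 3 * real forwarded_delay)"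
proof -
  have window: "(\<Sum>s\<in>arrived_rounds. \<Sum>v\<in>{s..<s + d s}. real (card (arrivals v))) \<le> 2 * real forwarded_delay"
    using sum_card_arrivals_window by (simp flip: of_nat_sum)
  have "(\<Sum>s\<in>arrived_rounds. \<E> (\<lambda>hs. mixed_loss hs s s) - l s a)
      \<le> (\<Sum>s\<in>arrived_rounds. \<E> (\<lambda>hs. mixed_loss hs (s + d s) s)
          + eta K m * (\<Sum>v\<in>{s..<s + d s}. real (card (arrivals v))) - l s a)"
    by (intro sum_mono) (use expect_mixed_loss_drift in force)
  also have "... = \<E> (\<lambda>hs. \<Sum>u\<in>{r..e}. batch_mean hs u) - (\<Sum>s\<in>arrived_rounds. l s a)
      + eta K m * (\<Sum>s\<in>arrived_rounds. \<Sum>v\<in>{s..<s + d s}. real (card (arrivals v)))"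
    by (simp add: sum.distrib sum_subtractf sum_distrib_left sum_expect_mixed_loss_arrival)
  also have "... \<le> ln (real K) / eta K m + eta K m / 2 * (2 * real K * real (card arrived_rounds) + 2 * real forwarded_delay)
      + eta K m * (2 * real forwarded_delay)"
  proof -
    have "eta K m / 2 * (\<Sum>u\<in>{r..e}. \<E> (\<lambda>hs. batch_second_moment hs u))
        \<le> eta K m / 2 * (2 * real K * real (card arrived_rounds) + 2 * real forwarded_delay)"
      using sum_expect_second_moment_le eta_pos by (intro mult_left_mono) auto
    moreover have "eta K m * (\<Sum>s\<in>arrived_rounds. \<Sum>v\<in>{s..<s + d s}. real (card (arrivals v)))
        \<le> eta K m * (2 * real forwarded_delay)"
      using window eta_pos by (intro mult_left_mono) auto
    ultimately show ?thesis using expect_sum_batch_mean_le[OF a] by linarith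
  qed
  also have "... = ln (real K) / eta K m + eta K m * (real K * real (card arrived_rounds) + 3 * real forwarded_delay)"
    by (simp add: algebra_simps)
  finally show ?thesis .
qed

lemma regret_not_arrived_rounds:
  assumes a: "a \<in> {1..K}"
  shows "(\<Sum>s\<in>{r..e} - arrived_rounds. \<E> (\<lambda>hs. mixed_loss hs s s) - l s a) \<le> 2 * sqrt (2 ^ m)"
proof -
  have "(\<Sum>s\<in>{r..e} - arrived_rounds. \<E> (\<lambda>hs. mixed_loss hs s s) - l s a) \<le> (\<Sum>s\<in>{r..e} - arrived_rounds. 1)"
  proof (rule sum_mono)
    fix s assume "s \<in> {r..e} - arrived_rounds"
    hence sT: "s \<in> {1..T}" using epoch_round_le_horizon by auto
    have "\<E> (\<lambda>hs. mixed_loss hs s s) \<le> 1" using sT by (intro expect_mixed_loss_le_1) auto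
    moreover have "l s a \<ge> 0" using loss_bounded[OF sT a] by simp
    ultimately show "\<E> (\<lambda>hs. mixed_loss hs s s) - l s a \<le> 1" by simp
  qed
  also have "... \<le> 2 * sqrt (2 ^ m)" using card_not_arrived by simp
  finally show ?thesis .
qed

lemma eta_scaled_epoch_size:
  "eta K m * (real K * real (card arrived_rounds) + 3 * real forwarded_delay) \<le> 3 * sqrt (2 ^ m)"
proof -
  have budget: "(exp 1 * real K * real (e - r + 1) / 2 + real forwarded_delay) * ln (real K) \<le> 2 ^ m"
  proof -
    have "{s \<in> {r..e}. real (d s) < beta K m} = forwarded_rounds" unfolding forwarded_rounds_def forwarded_def ..
    thus ?thesis using budget_ok unfolding epoch_ok_def forwarded_delay_def by simp
  qed
  have "card arrived_rounds \<le> card {r..e}" unfolding arrived_rounds_eq by (intro card_mono) auto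
  hence "real K * real (card arrived_rounds) \<le> real K * real (e - r + 1)"
    by (intro mult_left_mono) auto
  also have "... \<le> 3 * (exp 1 * real K * real (e - r + 1) / 2)"
  proof -
    have "2 * (real K * real (e - r + 1)) \<le> exp 1 * (real K * real (e - r + 1))"
      using exp_1_ge_2 by (intro mult_right_mono) auto
    hence "real K * real (e - r + 1) \<le> 3 * (exp 1 * (real K * real (e - r + 1)) / 2)"
      using zero_le_mult_iff[of "real K" "real (e - r + 1)"] by linarith
    thus ?thesis by (simp only: mult.assoc)
  qed
  finally have "ln (real K) * (real K * real (card arrived_rounds) + 3 * real forwarded_delay)
      \<le> ln (real K) * (3 * (exp 1 * real K * real (e - r + 1) / 2 + real forwarded_delay))"
    using ln_K_pos by (intro mult_left_mono) auto
  also have "... = 3 * ((exp 1 * real K * real (e - r + 1) / 2 + real forwarded_delay) * ln (real K))"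
    by (simp only: mult_ac)
  also have "... \<le> 3 * (sqrt (2 ^ m) * sqrt (2 ^ m))" using budget by simp
  finally show ?thesis unfolding eta_eq by (simp add: divide_le_eq mult_ac)
qed

lemma epoch_regret_bound: assumes a: "a \<in> {1..K}"
  shows "(\<Sum>s\<in>{r..e}. \<E> (\<lambda>hs. mixed_loss hs s s) - l s a) \<le> 6 * sqrt (2 ^ m)"
proof -
  have "arrived_rounds \<subseteq> {r..e}" unfolding arrived_rounds_eq by auto
  hence "(\<Sum>s\<in>{r..e}. \<E> (\<lambda>hs. mixed_loss hs s s) - l s a)
      = (\<Sum>s\<in>{r..e} - arrived_rounds. \<E> (\<lambda>hs. mixed_loss hs s s) - l s a)
        + (\<Sum>s\<in>arrived_rounds. \<E> (\<lambda>hs. mixed_loss hs s s) - l s a)"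
    by (intro sum.subset_diff) auto
  moreover have "ln (real K) / eta K m = sqrt (2 ^ m)" unfolding eta_eq using ln_K_pos by simp
  ultimately show ?thesis
    using regret_not_arrived_rounds[OF a] regret_arrived_rounds[OF a] eta_scaled_epoch_size by linarith
qed

end
section \<open>Summing over epochs\<close>

definition regret_budget :: "nat \<Rightarrow> nat \<Rightarrow> nat \<Rightarrow> real" where
  "regret_budget K T D = (real K * real T * exp 1 / 2 + (1 + 4 * exp 1) * real D) * ln (real K)"

text \<open>This is where the summand \<open>4 e D\<close> of the budget comes from.\<close>
lemma skipped_count_budget:
  fixes d :: "nat \<Rightarrow> nat"
  assumes K: "K \<ge> 2" and rt: "1 \<le> r" "t \<le> T"
    and violated: "2 ^ m < (real (card {s \<in> {r..t}. real (d s) \<ge> beta K m}))\<^sup>2"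
  shows "2 ^ m \<le> 4 * exp 1 * ln (real K) * real (\<Sum>s=1..T. d s)"
proof -
  define S where "S = {s \<in> {r..t}. real (d s) \<ge> beta K m}"
  have lnK: "ln (real K) \<ge> 1/2" using ln_ge_half[of "real K"] K by simp
  have less: "sqrt (2 ^ m) < real (card S)"
    using real_sqrt_less_mono[OF violated] unfolding S_def by simp
  have "real (card S) * beta K m = (\<Sum>s\<in>S. beta K m)" by simp
  also have "... \<le> (\<Sum>s\<in>S. real (d s))" unfolding S_def by (intro sum_mono) auto
  also have "... \<le> real (\<Sum>s=1..T. d s)" unfolding S_def by (subst of_nat_sum, intro sum_mono2) (use rt in auto)
  finally have SD: "real (card S) * beta K m \<le> real (\<Sum>s=1..T. d s)" .
  have "(2::real) ^ m = sqrt (2 ^ m) * sqrt (2 ^ m)" by simp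
  also have "... \<le> real (card S) * sqrt (2 ^ m)" using less by (intro mult_right_mono) auto
  also have "... = 4 * exp 1 * ln (real K) * (real (card S) * beta K m)"
    unfolding beta_def using lnK by (simp add: field_simps)
  also have "... \<le> 4 * exp 1 * ln (real K) * real (\<Sum>s=1..T. d s)" using SD lnK by (intro mult_left_mono) auto
  finally show ?thesis .
qed

lemma not_epoch_ok_le_budget:
  assumes K: "K \<ge> 2" and rt: "1 \<le> r" "r \<le> t" "t \<le> T" and fail: "\<not> epoch_ok K d m r t"
  shows "2 ^ m \<le> regret_budget K T (\<Sum>s=1..T. d s)"
proof -
  define D where "D = real (\<Sum>s=1..T. d s)"
  define F where "F = real (\<Sum>s \<in> {s \<in> {r..t}. real (d s) < beta K m}. d s)"
  have lnK: "ln (real K) \<ge> 1/2" using ln_ge_half[of "real K"] K by simp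
  have D0: "D \<ge> 0" unfolding D_def by (simp add: sum_nonneg)
  have budget: "regret_budget K T (\<Sum>s=1..T. d s)
      = (real K * real T * exp 1 / 2 + (1 + 4 * exp 1) * D) * ln (real K)"
    unfolding regret_budget_def D_def ..
  have "sum d {s \<in> {r..t}. real (d s) < beta K m} \<le> sum d {1..T}"
    using rt by (intro sum_mono2) auto
  hence FD: "F \<le> D" unfolding F_def D_def by (simp only: of_nat_le_iff)
  have "2 ^ m < (real (card {s \<in> {r..t}. real (d s) \<ge> beta K m}))\<^sup>2
      \<or> 2 ^ m < (exp 1 * real K * real (t - r + 1) / 2 + F) * ln (real K)"
    using fail unfolding epoch_ok_def F_def by (simp add: not_le less_max_iff_disj)
  thus ?thesis
  proof
    assume "2 ^ m < (real (card {s \<in> {r..t}. real (d s) \<ge> beta K m}))\<^sup>2"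
    hence "2 ^ m \<le> 4 * exp 1 * ln (real K) * D"
      unfolding D_def using skipped_count_budget[OF K rt(1,3)] by simp
    also have "... \<le> regret_budget K T (\<Sum>s=1..T. d s)"
      unfolding budget using lnK D0 by (simp add: algebra_simps)
    finally show ?thesis .
  next
    assume less: "2 ^ m < (exp 1 * real K * real (t - r + 1) / 2 + F) * ln (real K)"
    have "real (t - r + 1) \<le> real T" using rt by simp
    hence "(exp 1 * real K) * real (t - r + 1) \<le> (exp 1 * real K) * real T"
      by (intro mult_left_mono) auto
    hence "exp 1 * real K * real (t - r + 1) / 2 \<le> real K * real T * exp 1 / 2"
      by (simp only: mult_ac divide_right_mono)
    moreover have "F \<le> (1 + 4 * exp 1) * D"
      using FD mult_right_mono[OF _ D0, of 1 "1 + 4 * exp 1"] by simp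
    ultimately have "exp 1 * real K * real (t - r + 1) / 2 + F
        \<le> real K * real T * exp 1 / 2 + (1 + 4 * exp 1) * D" by linarith
    hence "(exp 1 * real K * real (t - r + 1) / 2 + F) * ln (real K)
        \<le> regret_budget K T (\<Sum>s=1..T. d s)"
      unfolding budget using lnK by (intro mult_right_mono) auto
    thus ?thesis using less by simp
  qed
qed

lemma epoch_index_budget:
  assumes K: "K \<ge> 2" and T: "T \<ge> 1"
  shows "2 ^ fst (epoch K d T) \<le> 2 * regret_budget K T (\<Sum>s=1..T. d s)"
proof -
  obtain m r where r: "1 \<le> r" "r \<le> snd (epoch K d T)" and M: "fst (epoch K d T) \<le> Suc m"
    and fail: "\<not> epoch_ok K d m r (snd (epoch K d T))"
    using epoch_index_le_Suc_not_ok[OF K T] by blast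
  have "(2::real) ^ fst (epoch K d T) \<le> 2 ^ Suc m" using M by (intro power_increasing) auto
  also have "... = 2 * 2 ^ m" by simp
  also have "... \<le> 2 * regret_budget K T (\<Sum>s=1..T. d s)"
    using not_epoch_ok_le_budget[OF K r(1) r(2) epoch_start_le[OF T] fail] by simp
  finally show ?thesis .
qed

lemma epoch_regret_le:
  fixes K T :: nat and l :: "nat \<Rightarrow> nat \<Rightarrow> real" and d :: "nat \<Rightarrow> nat"
  assumes K: "K \<ge> 2" and loss: "\<And>t a. t \<in> {1..T}
      \<Longrightarrow> a \<in> {1..K} \<Longrightarrow> 0 \<le> l t a \<and> l t a \<le> 1"
    and a: "a \<in> {1..K}"
  shows "(\<Sum>t\<in>{t\<in>{1..T}. fst (epoch K d t) = m}. expect K l d T (\<lambda>hs. l t (hs ! (t - 1))) - l t a)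
    \<le> 6 * sqrt (2 ^ m)"
proof (cases "{t\<in>{1..T}. fst (epoch K d t) = m} = {}")
  case True thus ?thesis by (simp only: sum.empty) simp
next
  case False
  then obtain r e where rounds: "{t\<in>{1..T}. fst (epoch K d t) = m} = {r..e}"
    and epoch: "1 \<le> r" "r \<le> e" "e \<le> T" "\<And>u. u \<in> {r..e} \<Longrightarrow> epoch K d u = (m, r)"
      "epoch_ok K d m r e"
    using epoch_rounds_interval[OF K] by blast
  interpret dew_epoch K l d T m r e using K loss epoch by unfold_locales auto
  have "(\<Sum>t\<in>{r..e}. \<E> (\<lambda>hs. l t (hs ! (t - 1))) - l t a)
      = (\<Sum>t\<in>{r..e}. \<E> (\<lambda>hs. mixed_loss hs t t) - l t a)"
    using expect_loss_eq_mixed_loss epoch(1,3) by (intro sum.cong refl) auto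
  also have "... \<le> 6 * sqrt (2 ^ m)" by (rule epoch_regret_bound[OF a])
  finally show ?thesis unfolding rounds .
qed

lemma expected_regret_eq_sum:
  assumes "K \<ge> 1"
  obtains a where "a \<in> {1..K}"
    "expected_regret K T l d = (\<Sum>t\<in>{1..T}. expect K l d T (\<lambda>hs. l t (hs ! (t - 1))) - l t a)"
proof -
  have "Min ((\<lambda>a. \<Sum>t=1..T. l t a) ` {1..K}) \<in> (\<lambda>a. \<Sum>t=1..T. l t a) ` {1..K}"
    using assms by (intro Min_in) auto
  then obtain a where a: "a \<in> {1..K}" and min: "Min ((\<lambda>a. \<Sum>t=1..T. l t a) ` {1..K}) = (\<Sum>t=1..T. l t a)"
    by auto
  have "expected_regret K T l d = expect K l d T (\<lambda>hs. \<Sum>t\<in>{1..T}. l t (hs ! (t - 1))) - (\<Sum>t=1..T. l t a)"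
    unfolding expected_regret_def min expect_def histories_def ..
  also have "... = (\<Sum>t\<in>{1..T}. expect K l d T (\<lambda>hs. l t (hs ! (t - 1))) - l t a)"
    by (simp only: expect_sum sum_subtractf)
  finally show ?thesis using that a by blast
qed

lemma expected_regret_le_final_epoch:
  assumes K: "K \<ge> 2" and loss: "\<And>t a. t \<in> {1..T}
      \<Longrightarrow> a \<in> {1..K} \<Longrightarrow> 0 \<le> l t a \<and> l t a \<le> 1"
  shows "expected_regret K T l d \<le> 6 * (2 + sqrt 2) * sqrt (2 ^ fst (epoch K d T))"
proof -
  define M where "M = fst (epoch K d T)"
  obtain a where a: "a \<in> {1..K}"
    and "expected_regret K T l d = (\<Sum>t\<in>{1..T}. expect K l d T (\<lambda>hs. l t (hs ! (t - 1))) - l t a)"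
    using expected_regret_eq_sum[of K T l d] K by auto
  note this(2)
  also have "... = (\<Sum>m\<le>M. \<Sum>t\<in>{t\<in>{1..T}. fst (epoch K d t)
      = m}. expect K l d T (\<lambda>hs. l t (hs ! (t - 1))) - l t a)"
    using epoch_index_mono[OF K] unfolding M_def by (intro sum.group[symmetric]) auto
  also have "... \<le> (\<Sum>m\<le>M. 6 * sqrt (2 ^ m))"
    by (intro sum_mono epoch_regret_le[OF K loss a])
  also have "... \<le> 6 * ((2 + sqrt 2) * sqrt (2 ^ M))"
    using sum_sqrt_power_2_le[of M] by (simp add: sum_distrib_left[symmetric])
  finally show ?thesis unfolding M_def by (simp only: mult.assoc)
qed

lemma expected_regret_le_budget:
  assumes K: "K \<ge> 2" and T: "T \<ge> 1"
    and loss: "\<And>t a. t \<in> {1..T} \<Longrightarrow> a \<in> {1..K} \<Longrightarrow> 0 \<le> l t a \<and> l t a \<le> 1"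
  shows "expected_regret K T l d \<le> 30 * sqrt (regret_budget K T (\<Sum>t=1..T. d t))"
proof -
  define B where "B = regret_budget K T (\<Sum>t=1..T. d t)"
  have budget: "2 ^ fst (epoch K d T) \<le> 2 * B"
    unfolding B_def by (rule epoch_index_budget[OF K T])
  have B: "0 \<le> B" using budget zero_less_power[of "2::real" "fst (epoch K d T)"] by linarith
  have "sqrt (2 ^ fst (epoch K d T)) \<le> sqrt (2 * B)" using budget by simp
  hence "6 * (2 + sqrt 2) * sqrt (2 ^ fst (epoch K d T)) \<le> 6 * (2 + sqrt 2) * (sqrt 2 * sqrt B)"
    by (intro mult_left_mono) (auto simp: real_sqrt_mult)
  with expected_regret_le_final_epoch[of K T l d, OF K loss]
  have "expected_regret K T l d \<le> 6 * (2 + sqrt 2) * (sqrt 2 * sqrt B)" by linarith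
  also have "... = (12 + 12 * sqrt 2) * sqrt B" by (simp add: algebra_simps)
  also have "... \<le> 30 * sqrt B"
  proof (intro mult_right_mono)
    have "sqrt 2 \<le> sqrt ((3/2::real)\<^sup>2)" by (intro real_sqrt_le_mono) (simp add: power2_eq_square)
    thus "12 + 12 * sqrt 2 \<le> (30::real)" by simp
  qed (simp add: B)
  finally show ?thesis unfolding B_def .
qed

theorem corollary7:
  fixes K T :: nat and l :: "nat \<Rightarrow> nat \<Rightarrow> real" and d :: "nat \<Rightarrow> nat"
  assumes "K \<ge> 2" and "T \<ge> 1"
    and "\<And>t a. t \<in> {1..T} \<Longrightarrow> a \<in> {1..K} \<Longrightarrow> 0 \<le> l t a \<and> l t a \<le> 1"
  shows "expected_regret K T l d
    \<le> 30 * sqrt ((real K * real T * exp 1 / 2 + (1 + 4 * exp 1) * real (\<Sum>t=1..T. d t)) * ln (real K))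
       + 10 * (exp 1)\<^sup>2 * real K * ln (real K) + 5"
proof -
  have "0 \<le> 10 * (exp 1)\<^sup>2 * real K * ln (real K)" using assms(1) by simp
  thus ?thesis using expected_regret_le_budget[of K T l d, OF assms(1,2,3)]
    unfolding regret_budget_def by linarith
qed

end
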